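(* Let $d$, $n$, $r$ be positive integers with $\gcd(d,n)=1$ and $n$ odd. Then, modulo $(1-aq^{r+d\langle -r/d\rangle_n})(1-bq^{d-r+d\langle (r-d)/d\rangle_n})$, $$ \sum_{k=0}^{n-1}\frac{(aq^r;q^d)_k\,(bq^{d-r};q^d)_k\,(x;q^{d})_k\, q^{dk}}{(q^d;q^d)_k\,(abq^{2d};q^{2d})_k} \equiv (-1)^{\langle -r/d\rangle_n}\sum_{k=0}^{n-1}\frac{(aq^r;q^d)_k\,(bq^{d-r};q^d)_k\,(-x;q^{d})_k\, q^{dk}}{(q^d;q^d)_k\,(abq^{2d};q^{2d})_k}. $$
   Context: $a,b,q,x$ are indeterminates. The $q$-shifted factorial is $(y;q)_0=1$ and $(y;q)_m=(1-y)(1-yq)\cdots(1-yq^{m-1})$ for $m\geqslant1$. $\langle y\rangle_m$ denotes the least non-negative residue modulo $m$ of a rational number $y$ whose denominator is coprime to $m$. For rational functions $A,B$ and a polynomial $P$, $A\equiv B\pmod P$ means $A-B=P\cdot C/D$ for polynomials $C,D$ with $D$ coprime to $P$. *)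

theory Defs
  imports "HOL-Computational_Algebra.Polynomial" "HOL-Computational_Algebra.Fraction_Field"
    "HOL-Number_Theory.Cong"
begin

text \<open>Polynomials over Q in the four indeterminates a, b, q, x (nested univariate polynomials),
  and rational functions as the fraction field.\<close>
type_synonym mpoly4 = "rat poly poly poly poly"
type_synonym rfun4 = "mpoly4 fract"

definition Va :: mpoly4 where "Va = [:[:[:[:0, 1:]:]:]:]"
definition Vb :: mpoly4 where "Vb = [:[:[:0, 1:]:]:]"
definition Vq :: mpoly4 where "Vq = [:[:0, 1:]:]"
definition Vx :: mpoly4 where "Vx = [:0, 1:]"

definition emb :: "mpoly4 \<Rightarrow> rfun4" where "emb p = Fract p 1"

definition qpoch :: "'a::comm_ring_1 \<Rightarrow> 'a \<Rightarrow> nat \<Rightarrow> 'a" where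
  "qpoch y p m = (\<Prod>i<m. (1 - y * p ^ i))"

text \<open>Least non-negative residue modulo m of a rational y (denominator coprime to m):
  the t in {0..<m} with y - t = u/v, m dvd u, v coprime to m.\<close>
definition lnres :: "rat \<Rightarrow> nat \<Rightarrow> nat" where
  "lnres y m = (THE t. t < m \<and>
      (let (u, v) = quotient_of (y - of_nat t) in coprime v (int m) \<and> int m dvd u))"

definition rcong :: "rfun4 \<Rightarrow> rfun4 \<Rightarrow> mpoly4 \<Rightarrow> bool" where
  "rcong A B P \<longleftrightarrow> (\<exists>C D. D \<noteq> 0 \<and> coprime D P \<and> A - B = emb P * emb C / emb D)"

text \<open>Polynomial associate of the factor (1 - y q^e) for an integer exponent e: for e < 0,
  1 - y q^e = q^e (q^{-e} - y) and q^e is a unit, so the modulus is q^{-e} - y.\<close>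
definition qfac :: "mpoly4 \<Rightarrow> int \<Rightarrow> mpoly4" where
  "qfac y e = (if e \<ge> 0 then 1 - y * Vq ^ nat e else Vq ^ nat (- e) - y)"

end

theory Submission
  imports Defs "HOL-Computational_Algebra.Polynomial_Factorial" "HOL-Computational_Algebra.Field_as_Ring"
begin

text \<open>Put \<open>Q = q\<^sup>d\<close>, \<open>c = b q\<^sup>d\<^sup>-\<^sup>r\<close> and \<open>N = \<langle>-r/d\<rangle>\<^sub>n\<close>. Modulo the first factor
  \<open>1 - a q\<^sup>r\<^sup>+\<^sup>d\<^sup>N\<close> we have \<open>a q\<^sup>r \<equiv> Q\<^sup>-\<^sup>N\<close>, so the terms with \<open>k > N\<close> vanish and the sum becomes
  \<open>F(x) = \<Sum>\<^sub>k\<^sub>=\<^sub>0\<^sup>N (Q\<^sup>-\<^sup>N;Q)\<^sub>k (c;Q)\<^sub>k Q\<^sup>k (x;Q)\<^sub>k / ((Q;Q)\<^sub>k (cQ\<^sup>1\<^sup>-\<^sup>N;Q\<^sup>2)\<^sub>k)\<close>.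
  Over any field, for generic \<open>Q\<close> and \<open>c\<close>, one has \<open>F(x) = (-1)\<^sup>N F(-x)\<close> exactly: as a polynomial in
  \<open>x\<close>, the defect \<open>F(x) - (-1)\<^sup>N F(-x)\<close> satisfies a \<open>q\<close>-difference equation whose right-hand side is
  the defect for \<open>N - 1\<close> and \<open>cQ\<close>, so by induction it is invariant under \<open>x \<mapsto> Qx\<close> and hence constant;
  its constant term vanishes for odd \<open>N\<close> by a telescoping two-step recurrence in \<open>N\<close>.
  Modulo the second factor the roles of \<open>a\<close> and \<open>b\<close> are swapped and \<open>N\<close> becomes
  \<open>\<langle>(r-d)/d\<rangle>\<^sub>n = n - 1 - \<langle>-r/d\<rangle>\<^sub>n\<close>, which has the same parity since \<open>n\<close> is odd. The two factors
  are coprime, so the two congruences combine.\<close>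

section \<open>A terminating reflection identity\<close>

lemma qpoch_0 [simp]: "qpoch y p 0 = 1"
  by (simp add: qpoch_def)

lemma qpoch_Suc: "qpoch y p (Suc k) = qpoch y p k * (1 - y * p ^ k)"
  by (simp add: qpoch_def)

lemma qpoch_Suc_shift: "qpoch y p (Suc k) = (1 - y) * qpoch (y * p) p k"
  unfolding qpoch_def prod.lessThan_Suc_shift by (simp add: mult.assoc)

lemma qpoch_shift: "qpoch (y * p) p k * (1 - y) = qpoch y p k * (1 - y * p ^ k)"
  using qpoch_Suc[of y p k] qpoch_Suc_shift[of y p k] by (simp add: mult.commute)

lemma qpoch_add: "qpoch y p (m + l) = qpoch y p m * qpoch (y * p ^ m) p l"
  by (induction l) (simp_all add: qpoch_Suc power_add mult.assoc)

lemma qpoch_nonzero: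
  "(\<And>i. i < k \<Longrightarrow> y * p ^ i \<noteq> (1::'a::idom)) \<Longrightarrow> qpoch y p k \<noteq> 0"
  unfolding qpoch_def by (subst prod_zero_iff) auto

lemma qpoch_inverse_power_eq_0:
  assumes "(Q::'a::field) \<noteq> 0" "N < k"
  shows "qpoch (inverse Q ^ N) Q k = 0"
proof -
  have "1 - inverse Q ^ N * Q ^ N = 0"
    using assms(1) by (simp add: power_inverse)
  thus ?thesis
    unfolding qpoch_def using assms(2) by (subst prod_zero_iff) auto
qed

definition generic :: "'a::field \<Rightarrow> 'a \<Rightarrow> bool" where
  "generic Q c \<longleftrightarrow> Q \<noteq> 0 \<and> (\<forall>j>0. Q ^ j \<noteq> 1) \<and> (\<forall>i::int. c * Q powi i \<noteq> 1)"

lemma generic_nonzero: "generic Q c \<Longrightarrow> Q \<noteq> 0"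
  by (simp add: generic_def)

lemma generic_power_ne_1: "generic Q c \<Longrightarrow> 0 < j \<Longrightarrow> Q ^ j \<noteq> 1"
  by (simp add: generic_def)

lemma generic_inverse_power_ne_1: "generic Q c \<Longrightarrow> 0 < j \<Longrightarrow> inverse Q ^ j \<noteq> 1"
  using generic_power_ne_1[of Q c j] by (simp add: power_inverse)

lemma generic_power_int_ne_1: "generic Q c \<Longrightarrow> c * Q powi i \<noteq> 1"
  by (simp add: generic_def)

lemma generic_power_ratio_ne_1:
  assumes "generic Q c"
  shows "c * (Q ^ j * inverse Q ^ N) \<noteq> 1"
proof -
  have "Q ^ j * inverse Q ^ N = Q powi (int j - int N)"
    using generic_nonzero[OF assms] by (simp add: power_int_diff divide_inverse power_inverse)
  thus ?thesis
    using generic_power_int_ne_1[OF assms] by simp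
qed

lemma generic_mult_base:
  assumes "generic Q c"
  shows "generic Q (c * Q)"
proof -
  have "c * Q * Q powi i = c * Q powi (i + 1)" for i :: int
    using generic_nonzero[OF assms] by (simp add: power_int_add_1 mult.assoc mult.commute)
  thus ?thesis
    using assms generic_power_int_ne_1[OF assms] unfolding generic_def by metis
qed

lemma qpoch_base_nonzero: "generic Q c \<Longrightarrow> qpoch Q Q k \<noteq> 0"
  by (rule qpoch_nonzero) (use generic_power_ne_1[of Q c "Suc _"] in simp)

lemma qpoch_square_base_nonzero:
  assumes "generic Q c"
  shows "qpoch (c * Q ^ j * inverse Q ^ N) (Q ^ 2) k \<noteq> 0"
proof (rule qpoch_nonzero)
  fix i
  have "(Q ^ 2) ^ i = Q ^ (2 * i)"
    by (simp add: power_mult)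
  hence "c * Q ^ j * inverse Q ^ N * (Q ^ 2) ^ i = c * (Q ^ (j + 2 * i) * inverse Q ^ N)"
    unfolding power_add by (simp add: mult_ac)
  thus "c * Q ^ j * inverse Q ^ N * (Q ^ 2) ^ i \<noteq> 1"
    by (metis generic_power_ratio_ne_1[OF assms])
qed

definition tcoeff :: "'a::field \<Rightarrow> nat \<Rightarrow> 'a \<Rightarrow> nat \<Rightarrow> 'a" where
  "tcoeff Q N c k = qpoch (inverse Q ^ N) Q k * qpoch c Q k * Q ^ k /
     (qpoch Q Q k * qpoch (c * Q * inverse Q ^ N) (Q ^ 2) k)"

lemma tcoeff_eq_0: "Q \<noteq> 0 \<Longrightarrow> N < k \<Longrightarrow> tcoeff Q N c k = 0"
  by (simp add: tcoeff_def qpoch_inverse_power_eq_0)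

lemma tcoeff_Suc:
  "tcoeff Q N c (Suc k) = tcoeff Q N c k *
    ((1 - inverse Q ^ N * Q ^ k) * (1 - c * Q ^ k) * Q /
     ((1 - Q * Q ^ k) * (1 - c * Q * inverse Q ^ N * Q ^ (2 * k))))"
proof -
  have "(Q ^ 2) ^ k = Q ^ (2 * k)"
    by (simp add: power_mult)
  thus ?thesis
    by (simp add: tcoeff_def qpoch_Suc divide_inverse mult_ac)
qed

lemma generic_factors_nonzero:
  fixes N k :: nat
  assumes g: "generic Q c"
  defines "w \<equiv> inverse Q ^ (N + 2)"
  shows "1 - w \<noteq> 0" "1 - w * Q \<noteq> 0" "1 - c * Q * w \<noteq> 0" "1 - c * Q * w * (Q ^ k) ^ 2 \<noteq> 0"
    "1 - Q * Q ^ k \<noteq> 0"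
proof -
  show "1 - w \<noteq> 0"
    using generic_inverse_power_ne_1[OF g, of "N + 2"] by (simp add: w_def)
  have "w * Q = inverse Q ^ (N + 1)"
    using generic_nonzero[OF g] by (simp add: w_def)
  thus "1 - w * Q \<noteq> 0"
    using generic_inverse_power_ne_1[OF g, of "N + 1"] by simp
  show "1 - c * Q * w \<noteq> 0"
    using generic_power_ratio_ne_1[OF g, of 1 "N + 2"] by (simp add: w_def mult_ac)
  show "1 - c * Q * w * (Q ^ k) ^ 2 \<noteq> 0"
    using generic_power_ratio_ne_1[OF g, of "2 * k + 1" "N + 2"]
    by (simp add: w_def power_add power_mult mult_ac)
  show "1 - Q * Q ^ k \<noteq> 0"
    using generic_power_ne_1[OF g, of "Suc k"] by simp
qed

lemma tcoeff_add2:
  fixes N k :: nat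
  assumes g: "generic Q c"
  defines "w \<equiv> inverse Q ^ (N + 2)" and "u \<equiv> Q ^ k"
  shows "tcoeff Q N c k = tcoeff Q (N + 2) c k *
    ((1 - w * u) * (1 - w * Q * u) * (1 - c * Q * w) /
     ((1 - w) * (1 - w * Q) * (1 - c * Q * w * u ^ 2)))"
proof -
  have Q: "Q \<noteq> 0"
    using generic_nonzero[OF g] .
  have w: "inverse Q ^ N = w * Q ^ 2"
    using Q by (simp add: w_def power_add power_inverse power2_eq_square field_simps)
  have nonzero: "1 - w \<noteq> 0" "1 - w * Q \<noteq> 0" "1 - c * Q * w \<noteq> 0" "1 - c * Q * w * u ^ 2 \<noteq> 0"
    "1 - Q * u \<noteq> 0"
    unfolding w_def u_def by (rule generic_factors_nonzero[OF g])+
  have "qpoch (w * Q ^ 2) Q k * ((1 - w) * (1 - w * Q)) =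
      qpoch w Q k * (1 - w * u) * (1 - w * Q * u)"
    using qpoch_shift[of w Q k] qpoch_shift[of "w * Q" Q k]
    by (simp add: u_def power2_eq_square mult_ac)
  hence A: "qpoch (inverse Q ^ N) Q k =
      qpoch w Q k * (1 - w * u) * (1 - w * Q * u) / ((1 - w) * (1 - w * Q))"
    unfolding w using nonzero(1,2) by (simp add: eq_divide_eq)
  have "qpoch (c * Q * w * Q ^ 2) (Q ^ 2) k * (1 - c * Q * w) =
      qpoch (c * Q * w) (Q ^ 2) k * (1 - c * Q * w * u ^ 2)"
    using qpoch_shift[of "c * Q * w" "Q ^ 2" k] by (simp add: u_def power_mult[symmetric] mult.commute)
  hence B: "qpoch (c * Q * inverse Q ^ N) (Q ^ 2) k =
      qpoch (c * Q * w) (Q ^ 2) k * (1 - c * Q * w * u ^ 2) / (1 - c * Q * w)"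
    unfolding w using nonzero(3) by (simp add: eq_divide_eq mult.assoc)
  have N2: "tcoeff Q (N + 2) c k =
      qpoch w Q k * qpoch c Q k * u / (qpoch Q Q k * qpoch (c * Q * w) (Q ^ 2) k)"
    by (simp add: tcoeff_def w_def u_def)
  have "qpoch Q Q k \<noteq> 0" "qpoch (c * Q * w) (Q ^ 2) k \<noteq> 0"
    using qpoch_base_nonzero[OF g] qpoch_square_base_nonzero[OF g, of 1 "N + 2"]
    by (simp_all add: w_def)
  moreover have "tcoeff Q N c k =
      (qpoch w Q k * (1 - w * u) * (1 - w * Q * u) / ((1 - w) * (1 - w * Q))) * qpoch c Q k * u /
      (qpoch Q Q k * (qpoch (c * Q * w) (Q ^ 2) k * (1 - c * Q * w * u ^ 2) / (1 - c * Q * w)))"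
    by (simp only: tcoeff_def A B u_def)
  ultimately show ?thesis
    unfolding N2 using nonzero by (simp add: field_simps)
qed

lemma tcoeff_telescope_identity:
  fixes c Q w u :: "'a::field"
  assumes "Q \<noteq> 0" "u \<noteq> 0" "1 - w \<noteq> 0" "1 - w * Q \<noteq> 0" "1 - c * Q * w \<noteq> 0"
    "1 - c * Q * w * u ^ 2 \<noteq> 0" "1 - Q * u \<noteq> 0"
  shows "1 - c * (1 - w * Q) / (1 - c * Q * w) *
      ((1 - w * u) * (1 - w * Q * u) * (1 - c * Q * w) / ((1 - w) * (1 - w * Q) * (1 - c * Q * w * u ^ 2)))
    = (1 - inverse u) / (1 - w) - (1 - w * u) * (1 - c * u) * Q / ((1 - Q * u) * (1 - c * Q * w * u ^ 2))
      * (1 - inverse u * inverse Q) / (1 - w)"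
proof -
  \<comment> \<open>naming the factors stops \<open>field_simps\<close> from multiplying them out before clearing denominators\<close>
  define E1 E2 E3 E4 E5 where "E1 = 1 - w" and "E2 = 1 - w * Q" and "E3 = 1 - c * Q * w"
    and "E4 = 1 - c * Q * w * u ^ 2" and "E5 = 1 - Q * u"
  have "1 - c * E2 / E3 * ((1 - w * u) * (1 - w * Q * u) * E3 / (E1 * E2 * E4)) =
      (1 - inverse u) / E1 - (1 - w * u) * (1 - c * u) * Q / (E5 * E4) * (1 - inverse u * inverse Q) / E1"
    using assms unfolding E1_def[symmetric] E2_def[symmetric] E3_def[symmetric] E4_def[symmetric]
      E5_def[symmetric]
    apply (simp add: field_simps)
    unfolding E1_def E2_def E3_def E4_def E5_def by algebra
  thus ?thesis
    unfolding E1_def E2_def E3_def E4_def E5_def by simp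
qed

lemma tcoeff_telescope:
  fixes N k :: nat
  assumes g: "generic Q c"
  defines "w \<equiv> inverse Q ^ (N + 2)"
  defines "R \<equiv> \<lambda>k. - tcoeff Q (N + 2) c k * (1 - inverse Q ^ k) / (1 - w)"
  shows "tcoeff Q (N + 2) c k - c * (1 - w * Q) / (1 - c * Q * w) * tcoeff Q N c k = R (Suc k) - R k"
proof -
  define u where "u = Q ^ k"
  define T where "T = tcoeff Q (N + 2) c k"
  define X1 where "X1 = (1 - w * u) * (1 - w * Q * u) * (1 - c * Q * w) /
    ((1 - w) * (1 - w * Q) * (1 - c * Q * w * u ^ 2))"
  define X2 where "X2 = (1 - w * u) * (1 - c * u) * Q / ((1 - Q * u) * (1 - c * Q * w * u ^ 2))"
  have Q: "Q \<noteq> 0"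
    using generic_nonzero[OF g] .
  have Suc: "tcoeff Q (N + 2) c (Suc k) = T * X2"
    using tcoeff_Suc[of Q "N + 2" c k] by (simp add: T_def X2_def w_def u_def power_mult mult_ac)
  have N: "tcoeff Q N c k = T * X1"
    using tcoeff_add2[OF g, of N k] by (simp add: T_def X1_def w_def u_def)
  have nonzero: "1 - w \<noteq> 0" "1 - w * Q \<noteq> 0" "1 - c * Q * w \<noteq> 0" "1 - c * Q * w * u ^ 2 \<noteq> 0"
    "1 - Q * u \<noteq> 0"
    unfolding w_def u_def by (rule generic_factors_nonzero[OF g])+
  have "u \<noteq> 0"
    using Q by (simp add: u_def)
  with nonzero have identity: "1 - c * (1 - w * Q) / (1 - c * Q * w) * X1 =
      (1 - inverse u) / (1 - w) - X2 * (1 - inverse u * inverse Q) / (1 - w)"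
    unfolding X1_def X2_def using tcoeff_telescope_identity[OF Q] by simp
  have "T - c * (1 - w * Q) / (1 - c * Q * w) * (T * X1) =
      T * (1 - c * (1 - w * Q) / (1 - c * Q * w) * X1)"
    by (simp add: algebra_simps)
  also have "\<dots> = - (T * X2) * (1 - inverse u * inverse Q) / (1 - w) - - T * (1 - inverse u) / (1 - w)"
    unfolding identity by (simp add: algebra_simps diff_divide_distrib)
  finally show ?thesis
    unfolding R_def N Suc T_def[symmetric] by (simp add: u_def power_inverse)
qed

lemma sum_tcoeff_add2:
  assumes g: "generic Q c"
  shows "(\<Sum>k<Suc (N + 2). tcoeff Q (N + 2) c k) =
    c * (1 - inverse Q ^ (N + 2) * Q) / (1 - c * Q * inverse Q ^ (N + 2)) * (\<Sum>k<Suc N. tcoeff Q N c k)"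
proof -
  have Q: "Q \<noteq> 0"
    using generic_nonzero[OF g] .
  define \<rho> where "\<rho> = c * (1 - inverse Q ^ (N + 2) * Q) / (1 - c * Q * inverse Q ^ (N + 2))"
  define R where "R = (\<lambda>k. - tcoeff Q (N + 2) c k * (1 - inverse Q ^ k) / (1 - inverse Q ^ (N + 2)))"
  have "(\<Sum>k<N + 3. tcoeff Q N c k) = (\<Sum>k<Suc N. tcoeff Q N c k)"
    using tcoeff_eq_0[OF Q, of N "N + 1" c] tcoeff_eq_0[OF Q, of N "N + 2" c]
    by (simp add: numeral_3_eq_3)
  hence "(\<Sum>k<Suc (N + 2). tcoeff Q (N + 2) c k) - \<rho> * (\<Sum>k<Suc N. tcoeff Q N c k) =
      (\<Sum>k<N + 3. tcoeff Q (N + 2) c k) - \<rho> * (\<Sum>k<N + 3. tcoeff Q N c k)"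
    by (simp add: numeral_3_eq_3)
  also have "\<dots> = (\<Sum>k<N + 3. tcoeff Q (N + 2) c k - \<rho> * tcoeff Q N c k)"
    by (simp add: sum_subtractf sum_distrib_left)
  also have "\<dots> = (\<Sum>k<N + 3. R (Suc k) - R k)"
    using tcoeff_telescope[OF g, of N] by (simp add: \<rho>_def R_def)
  also have "\<dots> = R (N + 3) - R 0"
    by (rule sum_lessThan_telescope)
  also have "\<dots> = 0"
    using tcoeff_eq_0[OF Q, of "N + 2" "N + 3" c] by (simp add: R_def)
  finally show ?thesis
    by (simp add: \<rho>_def)
qed

lemma sum_tcoeff_odd:
  assumes g: "generic Q c" and "odd N"
  shows "(\<Sum>k<Suc N. tcoeff Q N c k) = 0"
proof -
  obtain M where N: "N = 2 * M + 1"
    using \<open>odd N\<close> oddE by blast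
  have "(\<Sum>k<Suc (2 * M + 1). tcoeff Q (2 * M + 1) c k) = 0"
  proof (induction M)
    case 0
    have Q: "Q \<noteq> 0"
      using generic_nonzero[OF g] .
    have cQ: "Q * (c * inverse Q) = c"
      using Q by simp
    have "tcoeff Q 1 c 1 = ((1 - inverse Q) * Q) * (1 - c) / ((1 - Q) * (1 - c))"
      using Q by (simp add: tcoeff_def qpoch_def cQ mult_ac)
    also have "(1 - inverse Q) * Q = - (1 - Q)"
      using Q by (simp add: algebra_simps)
    finally have "tcoeff Q 1 c 1 = -1"
      using generic_power_int_ne_1[OF g, of 0] generic_power_ne_1[OF g, of 1] by (simp add: divide_eq_eq)
    thus ?case
      by (simp add: tcoeff_def)
  next
    case (Suc M)
    thus ?case
      using sum_tcoeff_add2[OF g, of "2 * M + 1"] by (simp add: algebra_simps)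
  qed
  thus ?thesis
    unfolding N .
qed

lemma tcoeff_Suc_Suc:
  assumes g: "generic Q c"
  shows "tcoeff Q (Suc M) c (Suc j) * (1 - Q ^ Suc j) =
    (1 - inverse Q ^ Suc M) * (1 - c) * Q / (1 - c * Q * inverse Q ^ Suc M) * tcoeff Q M (c * Q) j"
proof -
  have Q: "Q \<noteq> 0"
    using generic_nonzero[OF g] .
  have cancel: "(x * A1) * (y * A2) * R / ((A3 * e) * (f * A4)) * e = x * y * Q / f * (A1 * A2 * P / (A3 * A4))"
    if "R = Q * P" "e \<noteq> 0" "A3 \<noteq> 0" "A4 \<noteq> 0" "f \<noteq> 0" for x y R P A1 A2 A3 A4 e f
    using that by (simp add: field_simps)
  have "inverse Q ^ Suc M * Q = inverse Q ^ M"
    using Q by simp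
  moreover have "c * Q * inverse Q ^ Suc M * Q ^ 2 = c * Q * Q * inverse Q ^ M"
    using Q by (simp add: power2_eq_square)
  moreover have "qpoch Q Q (Suc j) = qpoch Q Q j * (1 - Q ^ Suc j)"
    by (simp add: qpoch_Suc)
  ultimately show ?thesis
    unfolding tcoeff_def qpoch_Suc_shift[of "inverse Q ^ Suc M"] qpoch_Suc_shift[of c]
      qpoch_Suc_shift[of "c * Q * inverse Q ^ Suc M"]
  proof (simp only:, intro cancel)
    show "1 - Q ^ Suc j \<noteq> 0"
      using generic_power_ne_1[OF g, of "Suc j"] by simp
    show "1 - c * Q * inverse Q ^ Suc M \<noteq> 0"
      using generic_power_ratio_ne_1[OF g, of 1 "Suc M"] by (simp add: mult_ac)
    show "qpoch Q Q j \<noteq> 0" "qpoch (c * Q * Q * inverse Q ^ M) (Q ^ 2) j \<noteq> 0"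
      using qpoch_base_nonzero[OF g] qpoch_square_base_nonzero[OF g, of 2 M j]
      by (simp_all add: power2_eq_square mult_ac)
  qed simp
qed

definition qpoch_poly :: "'a::comm_ring_1 \<Rightarrow> 'a \<Rightarrow> nat \<Rightarrow> 'a poly" where
  "qpoch_poly Q y k = (\<Prod>i<k. [:1, - (y * Q ^ i):])"

lemma poly_qpoch_poly: "poly (qpoch_poly Q y k) z = qpoch (y * z) Q k"
  unfolding qpoch_poly_def qpoch_def by (simp add: poly_prod mult_ac)

lemma qpoch_poly_pcompose: "qpoch_poly Q y k \<circ>\<^sub>p [:0, z:] = qpoch_poly Q (y * z) k"
  unfolding qpoch_poly_def by (simp add: pcompose_prod pcompose_pCons mult_ac)

lemma qpoch_poly_Suc_diff:
  "qpoch_poly Q y (Suc j) - qpoch_poly Q (Q * y) (Suc j) =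
    [:0, - (y * (1 - Q ^ Suc j)):] * qpoch_poly Q (Q * y) j"
proof -
  have "qpoch_poly Q y (Suc j) = [:1, - y:] * qpoch_poly Q (Q * y) j"
    unfolding qpoch_poly_def prod.lessThan_Suc_shift by (simp add: mult_ac)
  moreover have "qpoch_poly Q (Q * y) (Suc j) = qpoch_poly Q (Q * y) j * [:1, - (Q * y * Q ^ j):]"
    unfolding qpoch_poly_def by simp
  moreover have "[:1, - y:] - [:1, - (Q * y * Q ^ j):] = [:0, - (y * (1 - Q ^ Suc j)):]"
    by (simp add: algebra_simps)
  ultimately show ?thesis
    by (metis (no_types, lifting) mult.commute right_diff_distrib)
qed

definition tsum_poly :: "'a::field \<Rightarrow> nat \<Rightarrow> 'a \<Rightarrow> 'a \<Rightarrow> 'a poly" where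
  "tsum_poly Q N c y = (\<Sum>k<Suc N. smult (tcoeff Q N c k) (qpoch_poly Q y k))"

definition tsum_poly_defect :: "'a::field \<Rightarrow> nat \<Rightarrow> 'a \<Rightarrow> 'a \<Rightarrow> 'a poly" where
  "tsum_poly_defect Q N c y = tsum_poly Q N c y - smult ((-1) ^ N) (tsum_poly Q N c (- y))"

lemma poly_tsum_poly: "poly (tsum_poly Q N c y) z = (\<Sum>k<Suc N. tcoeff Q N c k * qpoch (y * z) Q k)"
  unfolding tsum_poly_def by (simp add: poly_sum poly_qpoch_poly)

lemma tsum_poly_pcompose: "tsum_poly Q N c y \<circ>\<^sub>p [:0, z:] = tsum_poly Q N c (y * z)"
  unfolding tsum_poly_def by (simp only: pcompose_sum pcompose_smult qpoch_poly_pcompose)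

lemma tsum_poly_defect_pcompose:
  "tsum_poly_defect Q N c y \<circ>\<^sub>p [:0, z:] = tsum_poly_defect Q N c (y * z)"
  unfolding tsum_poly_defect_def by (simp add: pcompose_diff pcompose_smult tsum_poly_pcompose)

lemma tsum_poly_Suc_diff:
  fixes M :: nat
  assumes g: "generic Q c"
  defines "K \<equiv> (1 - inverse Q ^ Suc M) * (1 - c) * Q / (1 - c * Q * inverse Q ^ Suc M)"
  shows "tsum_poly Q (Suc M) c y - tsum_poly Q (Suc M) c (Q * y) =
    [:0, - (y * K):] * tsum_poly Q M (c * Q) (Q * y)"
proof -
  have "tsum_poly Q (Suc M) c y - tsum_poly Q (Suc M) c (Q * y) =
      (\<Sum>k<Suc (Suc M). smult (tcoeff Q (Suc M) c k) (qpoch_poly Q y k - qpoch_poly Q (Q * y) k))"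
    unfolding tsum_poly_def by (simp add: sum_subtractf smult_diff_right)
  also have "\<dots> = (\<Sum>j<Suc M. smult (tcoeff Q (Suc M) c (Suc j))
      (qpoch_poly Q y (Suc j) - qpoch_poly Q (Q * y) (Suc j)))"
    by (subst sum.lessThan_Suc_shift) (simp add: qpoch_poly_def)
  also have "\<dots> = (\<Sum>j<Suc M. [:0, - (y * K):] * smult (tcoeff Q M (c * Q) j) (qpoch_poly Q (Q * y) j))"
  proof (rule sum.cong[OF refl])
    fix j
    have "smult (tcoeff Q (Suc M) c (Suc j)) (qpoch_poly Q y (Suc j) - qpoch_poly Q (Q * y) (Suc j)) =
        [:0, - (y * (tcoeff Q (Suc M) c (Suc j) * (1 - Q ^ Suc j))):] * qpoch_poly Q (Q * y) j"
      unfolding qpoch_poly_Suc_diff by (simp add: mult_ac)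
    thus "smult (tcoeff Q (Suc M) c (Suc j)) (qpoch_poly Q y (Suc j) - qpoch_poly Q (Q * y) (Suc j)) =
        [:0, - (y * K):] * smult (tcoeff Q M (c * Q) j) (qpoch_poly Q (Q * y) j)"
      unfolding tcoeff_Suc_Suc[OF g] K_def by (simp add: mult_ac)
  qed
  also have "\<dots> = [:0, - (y * K):] * tsum_poly Q M (c * Q) (Q * y)"
    unfolding tsum_poly_def by (simp only: sum_distrib_left)
  finally show ?thesis .
qed

lemma tsum_poly_defect_Suc_diff:
  fixes M :: nat
  assumes g: "generic Q c"
  defines "K \<equiv> (1 - inverse Q ^ Suc M) * (1 - c) * Q / (1 - c * Q * inverse Q ^ Suc M)"
  shows "tsum_poly_defect Q (Suc M) c y - tsum_poly_defect Q (Suc M) c (Q * y) =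
    [:0, - (y * K):] * tsum_poly_defect Q M (c * Q) (Q * y)"
proof -
  note diff = tsum_poly_Suc_diff[OF g, of M, folded K_def]
  have "tsum_poly_defect Q (Suc M) c y - tsum_poly_defect Q (Suc M) c (Q * y) =
      (tsum_poly Q (Suc M) c y - tsum_poly Q (Suc M) c (Q * y))
      - smult ((-1) ^ Suc M) (tsum_poly Q (Suc M) c (- y) - tsum_poly Q (Suc M) c (Q * (- y)))"
    unfolding tsum_poly_defect_def by (simp add: smult_diff_right)
  also have "\<dots> = [:0, - (y * K):] * tsum_poly Q M (c * Q) (Q * y)
      - smult ((-1) ^ Suc M) ([:0, - (- y * K):] * tsum_poly Q M (c * Q) (Q * (- y)))"
    unfolding diff ..
  also have "\<dots> = [:0, - (y * K):] * tsum_poly_defect Q M (c * Q) (Q * y)"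
    unfolding tsum_poly_defect_def by (simp add: right_diff_distrib mult_smult_right)
  finally show ?thesis .
qed

lemma tsum_poly_defect_eq_0: "generic Q c \<Longrightarrow> tsum_poly_defect Q N c y = 0"
proof (induction N arbitrary: c y)
  case 0
  thus ?case
    by (simp add: tsum_poly_defect_def tsum_poly_def qpoch_poly_def)
next
  case (Suc M)
  define p where "p = tsum_poly_defect Q (Suc M) c 1"
  have "p - tsum_poly_defect Q (Suc M) c Q = 0"
    using tsum_poly_defect_Suc_diff[OF Suc.prems, of M 1] Suc.IH[OF generic_mult_base[OF Suc.prems]]
    unfolding p_def by simp
  hence dilate: "p \<circ>\<^sub>p [:0, Q:] = p"
    using tsum_poly_defect_pcompose[of Q "Suc M" c 1 Q] unfolding p_def by simp
  have "coeff p j = 0" for j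
  proof (cases j)
    case 0
    have "coeff p 0 = (1 - (-1) ^ Suc M) * (\<Sum>k<Suc (Suc M). tcoeff Q (Suc M) c k)"
      unfolding p_def tsum_poly_defect_def poly_0_coeff_0[symmetric]
      by (simp add: poly_tsum_poly qpoch_def algebra_simps)
    also have "\<dots> = 0"
      using sum_tcoeff_odd[OF Suc.prems, of "Suc M"] by (cases "odd (Suc M)") simp_all
    finally show ?thesis
      using 0 by simp
  next
    case (Suc i)
    have "coeff p j = Q ^ j * coeff p j"
      using coeff_pcompose_linear[of p Q j] dilate by simp
    moreover have "Q ^ j \<noteq> 1"
      using generic_power_ne_1[OF \<open>generic Q c\<close>, of j] Suc by simp
    ultimately show ?thesis
      by (metis mult_cancel_right2)
  qed
  hence "p = 0"
    by (simp add: poly_eq_iff)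
  thus ?case
    using tsum_poly_defect_pcompose[of Q "Suc M" c 1 y] unfolding p_def by simp
qed

theorem tcoeff_sum_reflect:
  assumes "generic Q c"
  shows "(\<Sum>k<Suc N. tcoeff Q N c k * qpoch x Q k) =
    (-1) ^ N * (\<Sum>k<Suc N. tcoeff Q N c k * qpoch (- x) Q k)"
  using arg_cong[OF tsum_poly_defect_eq_0[OF assms, of N 1], of "\<lambda>p. poly p x"]
  by (simp add: tsum_poly_defect_def poly_tsum_poly)

section \<open>Congruences modulo a polynomial\<close>

lemma emb_mult: "emb (p * q) = emb p * emb q"
  by (simp add: emb_def)
lemma emb_add: "emb (p + q) = emb p + emb q"
  by (simp add: emb_def)
lemma emb_diff: "emb (p - q) = emb p - emb q"
  by (simp add: emb_def)
lemma emb_minus: "emb (- p) = - emb p"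
  by (simp add: emb_def)
lemma emb_1: "emb 1 = 1"
  by (simp add: emb_def One_fract_def)
lemma emb_0: "emb 0 = 0"
  by (simp add: emb_def Zero_fract_def)
lemma emb_power: "emb (p ^ n) = emb p ^ n"
  by (induction n) (simp_all add: emb_1 emb_mult)
lemma emb_eq_iff: "emb p = emb q \<longleftrightarrow> p = q"
  by (simp add: emb_def eq_fract)
lemma emb_eq_0_iff: "emb p = 0 \<longleftrightarrow> p = 0"
  using emb_eq_iff[of p 0] by (simp add: emb_0)
lemma emb_divide: "D \<noteq> 0 \<Longrightarrow> emb C / emb D = Fract C D"
  by (simp add: emb_def)

lemmas emb_simps = emb_mult emb_add emb_diff emb_minus emb_1 emb_0 emb_power

definition regular_at :: "mpoly4 \<Rightarrow> rfun4 \<Rightarrow> bool" where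
  "regular_at P z \<longleftrightarrow> (\<exists>C D. D \<noteq> 0 \<and> coprime D P \<and> z = emb C / emb D)"

definition unit_at :: "mpoly4 \<Rightarrow> rfun4 \<Rightarrow> bool" where
  "unit_at P z \<longleftrightarrow> (\<exists>C D. C \<noteq> 0 \<and> D \<noteq> 0 \<and> coprime C P \<and> coprime D P \<and> z = emb C / emb D)"

lemma regular_at_emb [simp]: "regular_at P (emb p)"
proof -
  have "(1::mpoly4) \<noteq> 0 \<and> coprime 1 P \<and> emb p = emb p / emb 1"
    by (simp add: emb_1)
  thus ?thesis
    unfolding regular_at_def by blast
qed

lemma regular_at_1 [simp]: "regular_at P 1" and regular_at_0 [simp]: "regular_at P 0"
  using regular_at_emb[of P 1] regular_at_emb[of P 0] by (simp_all add: emb_1 emb_0)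

lemma regular_at_add:
  assumes "regular_at P x" "regular_at P y"
  shows "regular_at P (x + y)"
proof -
  obtain C D C' D' where "D \<noteq> 0" "coprime D P" "x = emb C / emb D"
    "D' \<noteq> 0" "coprime D' P" "y = emb C' / emb D'"
    using assms unfolding regular_at_def by blast
  hence "D * D' \<noteq> 0 \<and> coprime (D * D') P \<and> x + y = emb (C * D' + C' * D) / emb (D * D')"
    by (simp add: emb_divide coprime_mult_left_iff)
  thus ?thesis
    unfolding regular_at_def by blast
qed

lemma regular_at_mult:
  assumes "regular_at P x" "regular_at P y"
  shows "regular_at P (x * y)"
proof -
  obtain C D C' D' where "D \<noteq> 0" "coprime D P" "x = emb C / emb D"
    "D' \<noteq> 0" "coprime D' P" "y = emb C' / emb D'"
    using assms unfolding regular_at_def by blast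
  hence "D * D' \<noteq> 0 \<and> coprime (D * D') P \<and> x * y = emb (C * C') / emb (D * D')"
    by (simp add: emb_divide coprime_mult_left_iff)
  thus ?thesis
    unfolding regular_at_def by blast
qed

lemma regular_at_minus: "regular_at P x \<Longrightarrow> regular_at P (- x)"
  using regular_at_mult[OF regular_at_emb[of P "- 1"]] by (simp add: emb_minus emb_1)

lemma regular_at_diff: "regular_at P x \<Longrightarrow> regular_at P y \<Longrightarrow> regular_at P (x - y)"
  using regular_at_add[of P x "- y"] regular_at_minus[of P y] by simp

lemma regular_at_power: "regular_at P x \<Longrightarrow> regular_at P (x ^ n)"
  by (induction n) (simp_all add: regular_at_mult)

lemma regular_at_sum: "(\<And>k. k \<in> A \<Longrightarrow> regular_at P (f k)) \<Longrightarrow> regular_at P (sum f A)"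
  by (induction A rule: infinite_finite_induct) (simp_all add: regular_at_add)

lemma regular_at_qpoch: "regular_at P y \<Longrightarrow> regular_at P p \<Longrightarrow> regular_at P (qpoch y p k)"
  unfolding qpoch_def by (induction k) (simp_all add: regular_at_mult regular_at_diff regular_at_power)

lemma unit_at_emb: "C \<noteq> 0 \<Longrightarrow> coprime C P \<Longrightarrow> unit_at P (emb C)"
proof -
  assume "C \<noteq> 0" "coprime C P"
  moreover have "(1::mpoly4) \<noteq> 0 \<and> coprime 1 P \<and> emb C = emb C / emb 1"
    by (simp add: emb_1)
  ultimately show ?thesis
    unfolding unit_at_def by blast
qed

lemma unit_at_1 [simp]: "unit_at P 1"
  using unit_at_emb[of 1 P] by (simp add: emb_1)

lemma unit_at_imp_regular_at: "unit_at P z \<Longrightarrow> regular_at P z"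
  unfolding unit_at_def regular_at_def by blast

lemma unit_at_nonzero: "unit_at P z \<Longrightarrow> z \<noteq> 0"
  unfolding unit_at_def by (auto simp: emb_eq_0_iff)

lemma unit_at_inverse: "unit_at P z \<Longrightarrow> unit_at P (inverse z)"
  unfolding unit_at_def by (metis inverse_divide)

lemma unit_at_mult:
  assumes "unit_at P x" "unit_at P y"
  shows "unit_at P (x * y)"
proof -
  obtain C D C' D' where "C \<noteq> 0" "D \<noteq> 0" "coprime C P" "coprime D P" "x = emb C / emb D"
    "C' \<noteq> 0" "D' \<noteq> 0" "coprime C' P" "coprime D' P" "y = emb C' / emb D'"
    using assms unfolding unit_at_def by blast
  hence "C * C' \<noteq> 0 \<and> D * D' \<noteq> 0 \<and> coprime (C * C') P \<and> coprime (D * D') P \<and>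
      x * y = emb (C * C') / emb (D * D')"
    by (simp add: emb_divide coprime_mult_left_iff)
  thus ?thesis
    unfolding unit_at_def by blast
qed

lemma unit_at_power: "unit_at P x \<Longrightarrow> unit_at P (x ^ n)"
  by (induction n) (simp_all add: unit_at_mult)

lemma unit_at_qpoch: "(\<And>i. i < k \<Longrightarrow> unit_at P (1 - y * p ^ i)) \<Longrightarrow> unit_at P (qpoch y p k)"
  unfolding qpoch_def by (induction k) (simp_all add: unit_at_mult)

lemma regular_at_divide: "regular_at P x \<Longrightarrow> unit_at P y \<Longrightarrow> regular_at P (x / y)"
  by (simp add: divide_inverse regular_at_mult unit_at_imp_regular_at unit_at_inverse)

lemma rcong_iff: "rcong A B P \<longleftrightarrow> (\<exists>w. regular_at P w \<and> A - B = emb P * w)"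
proof
  assume "rcong A B P"
  then obtain C D where "D \<noteq> 0" "coprime D P" "A - B = emb P * (emb C / emb D)"
    unfolding rcong_def by auto
  thus "\<exists>w. regular_at P w \<and> A - B = emb P * w"
    unfolding regular_at_def by blast
next
  assume "\<exists>w. regular_at P w \<and> A - B = emb P * w"
  then obtain w C D where "D \<noteq> 0" "coprime D P" "w = emb C / emb D" "A - B = emb P * w"
    unfolding regular_at_def by blast
  hence "D \<noteq> 0 \<and> coprime D P \<and> A - B = emb P * emb C / emb D"
    by simp
  thus "rcong A B P"
    unfolding rcong_def by blast
qed

lemma rcong_refl [simp]: "rcong A A P"
  unfolding rcong_iff by (intro exI[of _ 0]) simp

lemma rcong_sym: "rcong A B P \<Longrightarrow> rcong B A P"
proof -
  assume "rcong A B P"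
  then obtain w where "regular_at P w" "A - B = emb P * w"
    unfolding rcong_iff by blast
  thus ?thesis
    unfolding rcong_iff by (intro exI[of _ "- w"]) (simp add: regular_at_minus algebra_simps)
qed

lemma rcong_add:
  assumes "rcong A B P" "rcong C D P"
  shows "rcong (A + C) (B + D) P"
proof -
  obtain v w where "regular_at P v" "A - B = emb P * v" "regular_at P w" "C - D = emb P * w"
    using assms unfolding rcong_iff by blast
  thus ?thesis
    unfolding rcong_iff by (intro exI[of _ "v + w"]) (simp add: regular_at_add algebra_simps)
qed

lemma rcong_diff:
  assumes "rcong A B P" "rcong C D P"
  shows "rcong (A - C) (B - D) P"
proof -
  obtain v w where "regular_at P v" "A - B = emb P * v" "regular_at P w" "C - D = emb P * w"
    using assms unfolding rcong_iff by blast
  thus ?thesis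
    unfolding rcong_iff by (intro exI[of _ "v - w"]) (simp add: regular_at_diff algebra_simps)
qed

lemma rcong_trans: "rcong A B P \<Longrightarrow> rcong B C P \<Longrightarrow> rcong A C P"
  using rcong_add[of A B P B C] by (simp add: rcong_iff)

lemma rcong_mult:
  assumes "rcong A B P" "rcong C D P" "regular_at P A" "regular_at P D"
  shows "rcong (A * C) (B * D) P"
proof -
  obtain v w where v: "regular_at P v" "A - B = emb P * v" and w: "regular_at P w" "C - D = emb P * w"
    using assms(1,2) unfolding rcong_iff by blast
  have "A * C - B * D = A * (C - D) + D * (A - B)"
    by (simp add: algebra_simps)
  also have "\<dots> = emb P * (A * w + D * v)"
    unfolding v(2) w(2) by (simp add: algebra_simps)
  moreover have "regular_at P (A * w + D * v)"
    using assms(3,4) v(1) w(1) by (intro regular_at_add regular_at_mult)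
  ultimately show ?thesis
    unfolding rcong_iff by metis
qed

lemma rcong_mult_left:
  assumes "rcong A B P" "regular_at P c"
  shows "rcong (c * A) (c * B) P"
proof -
  obtain v where "regular_at P v" "A - B = emb P * v"
    using assms(1) unfolding rcong_iff by blast
  moreover from this have "c * A - c * B = emb P * (c * v)"
    by (simp add: algebra_simps)
  ultimately show ?thesis
    unfolding rcong_iff using assms(2) regular_at_mult by blast
qed

lemma rcong_mult_right: "rcong A B P \<Longrightarrow> regular_at P c \<Longrightarrow> rcong (A * c) (B * c) P"
  using rcong_mult_left[of A B P c] by (simp add: mult.commute)

lemma rcong_sum:
  "(\<And>k. k \<in> I \<Longrightarrow> rcong (f k) (g k) P) \<Longrightarrow> rcong (sum f I) (sum g I) P"
  by (induction I rule: infinite_finite_induct) (simp_all add: rcong_add)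

lemma rcong_qpoch:
  assumes "rcong y y' P" "regular_at P y" "regular_at P y'" "regular_at P p"
  shows "rcong (qpoch y p k) (qpoch y' p k) P"
proof (induction k)
  case (Suc k)
  have "rcong (1 - y * p ^ k) (1 - y' * p ^ k) P"
    using assms by (intro rcong_diff rcong_mult) (simp_all add: regular_at_power)
  thus ?case
    unfolding qpoch_Suc using Suc assms
    by (intro rcong_mult) (simp_all add: regular_at_qpoch regular_at_diff regular_at_mult regular_at_power)
qed simp

lemma rcong_divide:
  assumes "rcong A B P" "rcong C D P" "regular_at P B" "unit_at P C" "unit_at P D"
  shows "rcong (A / C) (B / D) P"
proof -
  obtain v w where v: "regular_at P v" "A - B = emb P * v" and w: "regular_at P w" "C - D = emb P * w"
    using assms(1,2) unfolding rcong_iff by blast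
  have "A / C - B / D = inverse (C * D) * (D * (A - B) - B * (C - D))"
    using unit_at_nonzero[OF assms(4)] unit_at_nonzero[OF assms(5)] by (simp add: field_simps)
  also have "\<dots> = emb P * (inverse (C * D) * (D * v - B * w))"
    unfolding v(2) w(2) by (simp add: algebra_simps)
  moreover have "regular_at P (inverse (C * D) * (D * v - B * w))"
    using assms(3-5) v(1) w(1)
    by (simp add: regular_at_mult regular_at_diff unit_at_imp_regular_at unit_at_inverse unit_at_mult)
  ultimately show ?thesis
    unfolding rcong_iff by metis
qed

lemma rcong_coprime_mult:
  assumes "coprime P1 P2" "regular_at (P1 * P2) (A - B)" "rcong A B P1" "rcong A B P2"
  shows "rcong A B (P1 * P2)"
proof -
  obtain E D0 where D0: "D0 \<noteq> 0" "coprime D0 (P1 * P2)" and AB: "A - B = emb E / emb D0"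
    using assms(2) unfolding regular_at_def by auto
  have dvd: "P dvd E" if cong: "rcong A B P" for P
  proof -
    obtain C D where "D \<noteq> 0" "coprime D P" "A - B = emb P * emb C / emb D"
      using cong unfolding rcong_def by auto
    with D0 AB have "emb E / emb D0 = emb P * emb C / emb D"
      by simp
    with D0 \<open>D \<noteq> 0\<close> have "emb (E * D) = emb (P * C * D0)"
      by (simp add: emb_mult emb_eq_0_iff field_simps)
    hence "E * D = P * C * D0"
      by (simp add: emb_eq_iff)
    hence "P dvd E * D"
      by (metis dvd_triv_left mult.assoc)
    thus ?thesis
      using \<open>coprime D P\<close> by (simp add: coprime_commute coprime_dvd_mult_left_iff)
  qed
  have "P1 * P2 dvd E"
    using dvd[OF assms(3)] dvd[OF assms(4)] D0(2) assms(1) by (simp add: divides_mult)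
  then obtain C where "E = P1 * P2 * C" ..
  with D0 AB have "D0 \<noteq> 0 \<and> coprime D0 (P1 * P2) \<and> A - B = emb (P1 * P2) * emb C / emb D0"
    by (simp add: emb_mult)
  thus ?thesis
    unfolding rcong_def by blast
qed

section \<open>Coprimality of the factors\<close>

lemma diff_dvd_power_diff: "(x - y) dvd (x ^ n - y ^ n)" for x y :: "'a::comm_ring_1"
  using power_diff_sumr2[of x n y] by simp

lemma is_unit_if_dvd_const_and_unit_coeff:
  fixes g h :: "'a::factorial_ring_gcd poly"
  assumes "g dvd [:u:]" "u \<noteq> 0" "g dvd h" "is_unit (coeff h i)"
  shows "is_unit g"
proof -
  have "degree g = 0"
    using dvd_imp_degree_le[OF assms(1)] assms(2) by simp
  hence g: "g = [:coeff g 0:]"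
    using degree_0_id by metis
  hence "coeff g 0 dvd coeff h i"
    using assms(3) const_poly_dvd_iff by metis
  hence "is_unit (coeff g 0)"
    using assms(4) dvd_trans by blast
  thus ?thesis
    using g is_unit_const_poly_iff by metis
qed

lemma one_minus_const_poly: "1 - [:y:] = [:1 - y:]"
  by (simp add: poly_eq_iff coeff_pCons split: nat.split)

lemma coeff_one_minus_const_X_power: "0 < k \<Longrightarrow> coeff (1 - [:\<mu>:] * [:0, 1:] ^ k) 0 = 1"
  by (simp add: monom_altdef[symmetric] coeff_monom)

lemma coeff_X_power_minus_const: "0 < e \<Longrightarrow> coeff ([:0, 1:] ^ e - [:\<mu>:]) e = 1"
  by (cases e) (simp_all add: monom_altdef[of 1, simplified, symmetric] coeff_monom)

lemma const_X_power_power: "([:\<mu>:] * [:0, 1:] ^ k) ^ l = [:\<mu> ^ l:] * [:0, 1:] ^ (k * l)"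
  by (simp only: power_mult_distrib poly_const_pow power_mult)

text \<open>In each case a common divisor also divides a nonzero constant, so it has degree 0, and it divides
  a polynomial with a unit coefficient.\<close>

lemma coprime_one_minus_X_power:
  fixes \<mu> \<nu> :: "'a::factorial_ring_gcd"
  assumes "0 < k \<or> 0 < l" "\<nu> ^ k \<noteq> \<mu> ^ l"
  shows "coprime (1 - [:\<mu>:] * [:0, 1:] ^ k) (1 - [:\<nu>:] * [:0, 1:] ^ l)"
  unfolding coprime_def
proof (intro allI impI)
  fix g
  assume g1: "g dvd 1 - [:\<mu>:] * [:0, 1:] ^ k" and g2: "g dvd 1 - [:\<nu>:] * [:0, 1:] ^ l"
  have h1: "g dvd 1 - [:\<mu> ^ l:] * [:0, 1:] ^ (k * l)"
    using dvd_trans[OF g1 diff_dvd_power_diff[of 1 _ l]] by (simp only: const_X_power_power power_one)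
  have h2: "g dvd 1 - [:\<nu> ^ k:] * [:0, 1:] ^ (k * l)"
    using dvd_trans[OF g2 diff_dvd_power_diff[of 1 _ k]]
    by (simp only: const_X_power_power power_one mult.commute)
  have "g dvd [:\<nu> ^ k:] * (1 - [:\<mu> ^ l:] * [:0, 1:] ^ (k * l))
      - [:\<mu> ^ l:] * (1 - [:\<nu> ^ k:] * [:0, 1:] ^ (k * l))"
    by (rule dvd_diff[OF dvd_mult[OF h1] dvd_mult[OF h2]])
  hence "g dvd [:\<nu> ^ k - \<mu> ^ l:]"
    by (simp add: algebra_simps)
  moreover have "\<nu> ^ k - \<mu> ^ l \<noteq> 0"
    using assms(2) by simp
  moreover have "is_unit (coeff (1 - [:\<mu>:] * [:0, 1:] ^ k) 0) \<or> is_unit (coeff (1 - [:\<nu>:] * [:0, 1:] ^ l) 0)"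
    using assms(1) coeff_one_minus_const_X_power[of k \<mu>] coeff_one_minus_const_X_power[of l \<nu>]
    by (metis dvd_refl)
  ultimately show "is_unit g"
    using is_unit_if_dvd_const_and_unit_coeff g1 g2 by blast
qed

lemma coprime_X_power_minus_one_minus:
  fixes \<mu> \<nu> :: "'a::factorial_ring_gcd"
  assumes "0 < e" "\<nu> ^ e * \<mu> ^ l \<noteq> 1"
  shows "coprime ([:0, 1:] ^ e - [:\<mu>:]) (1 - [:\<nu>:] * [:0, 1:] ^ l)"
  unfolding coprime_def
proof (intro allI impI)
  fix g
  assume g1: "g dvd [:0, 1:] ^ e - [:\<mu>:]" and g2: "g dvd 1 - [:\<nu>:] * [:0, 1:] ^ l"
  have h1: "g dvd [:0, 1:] ^ (e * l) - [:\<mu> ^ l:]"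
    using dvd_trans[OF g1 diff_dvd_power_diff[of _ _ l]] by (simp add: poly_const_pow power_mult)
  have h2: "g dvd 1 - [:\<nu> ^ e:] * [:0, 1:] ^ (e * l)"
    using dvd_trans[OF g2 diff_dvd_power_diff[of 1 _ e]]
    by (simp only: const_X_power_power power_one mult.commute)
  have "g dvd (1 - [:\<nu> ^ e:] * [:0, 1:] ^ (e * l)) + [:\<nu> ^ e:] * ([:0, 1:] ^ (e * l) - [:\<mu> ^ l:])"
    by (rule dvd_add[OF h2 dvd_mult[OF h1]])
  hence "g dvd [:1 - \<nu> ^ e * \<mu> ^ l:]"
    by (simp add: algebra_simps one_minus_const_poly)
  moreover have "is_unit (coeff ([:0, 1:] ^ e - [:\<mu>:]) e)"
    unfolding coeff_X_power_minus_const[OF assms(1)] by simp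
  ultimately show "is_unit g"
    using is_unit_if_dvd_const_and_unit_coeff[OF _ _ g1] assms(2) by simp
qed

lemma coprime_X_power_minus:
  fixes \<mu> \<nu> :: "'a::factorial_ring_gcd"
  assumes "0 < e" "\<nu> ^ e \<noteq> \<mu> ^ f"
  shows "coprime ([:0, 1:] ^ e - [:\<mu>:]) ([:0, 1:] ^ f - [:\<nu>:])"
  unfolding coprime_def
proof (intro allI impI)
  fix g
  assume g1: "g dvd [:0, 1:] ^ e - [:\<mu>:]" and g2: "g dvd [:0, 1:] ^ f - [:\<nu>:]"
  have "g dvd [:0, 1:] ^ (e * f) - [:\<mu> ^ f:]"
    using dvd_trans[OF g1 diff_dvd_power_diff[of _ _ f]] by (simp add: poly_const_pow power_mult)
  moreover have "g dvd [:0, 1:] ^ (e * f) - [:\<nu> ^ e:]"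
    using dvd_trans[OF g2 diff_dvd_power_diff[of _ _ e]]
    by (simp add: poly_const_pow power_mult[symmetric] mult.commute)
  ultimately have "g dvd ([:0, 1:] ^ (e * f) - [:\<mu> ^ f:]) - ([:0, 1:] ^ (e * f) - [:\<nu> ^ e:])"
    by (rule dvd_diff)
  hence "g dvd [:\<nu> ^ e - \<mu> ^ f:]"
    by (simp add: algebra_simps)
  moreover have "is_unit (coeff ([:0, 1:] ^ e - [:\<mu>:]) e)"
    unfolding coeff_X_power_minus_const[OF assms(1)] by simp
  ultimately show "is_unit g"
    using is_unit_if_dvd_const_and_unit_coeff[OF _ _ g1] assms(2) by simp
qed

lemma coprime_const_poly:
  fixes u v :: "'a::factorial_ring_gcd"
  assumes "coprime u v"
  shows "coprime [:u:] [:v:]"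
  unfolding coprime_def
proof (intro allI impI)
  fix c
  assume cu: "c dvd [:u:]" and cv: "c dvd [:v:]"
  have "u \<noteq> 0 \<or> v \<noteq> 0"
    using assms by auto
  hence "degree c = 0"
    using dvd_imp_degree_le[OF cu] dvd_imp_degree_le[OF cv] by auto
  hence c: "c = [:coeff c 0:]"
    using degree_0_id by metis
  hence "coeff c 0 dvd u" "coeff c 0 dvd v"
    using cu cv const_poly_dvd_const_poly_iff by metis+
  hence "is_unit (coeff c 0)"
    using assms coprime_def by blast
  thus "is_unit c"
    using c is_unit_const_poly_iff by metis
qed


text \<open>The coefficients of an \<open>mpoly4\<close> as a polynomial in \<open>x\<close> and \<open>q\<close> lie in \<open>rat poly poly\<close> (the
  variable \<open>a\<close> innermost); there \<open>abmono i j\<close> is the monomial \<open>a\<^sup>i b\<^sup>j\<close>.\<close>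

definition abmono :: "nat \<Rightarrow> nat \<Rightarrow> rat poly poly" where
  "abmono i j = [:[:0, 1:]:] ^ i * [:0, 1:] ^ j"

lemma abmono_eq_monom: "abmono i j = monom (monom 1 i) j"
  by (simp add: abmono_def monom_altdef poly_const_pow smult_monom)

lemma abmono_eq_iff: "abmono i j = abmono i' j' \<longleftrightarrow> i = i' \<and> j = j'"
  by (auto simp: abmono_eq_monom monom_eq_iff')

lemma abmono_nonzero: "abmono i j \<noteq> 0"
  by (simp add: abmono_eq_monom)

lemma abmono_0_0: "abmono 0 0 = 1"
  by (simp add: abmono_def)

lemma abmono_mult: "abmono i j * abmono i' j' = abmono (i + i') (j + j')"
  by (simp add: abmono_def power_add mult_ac)

lemma abmono_power: "abmono i j ^ k = abmono (i * k) (j * k)"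
  by (simp add: abmono_def power_mult_distrib power_mult)

lemma Va_Vb_power_eq: "Va ^ i * Vb ^ j = [:[:abmono i j:]:]"
  by (simp add: Va_def Vb_def abmono_def poly_const_pow)

lemma Vq_eq: "Vq = [:[:0, 1:]:]"
  by (simp add: Vq_def)

lemma qfac_monomial_nonneg:
  "0 \<le> e \<Longrightarrow> qfac (Va ^ i * Vb ^ j) e = [:1 - [:abmono i j:] * [:0, 1:] ^ nat e:]"
  by (simp add: qfac_def Va_Vb_power_eq Vq_eq poly_const_pow one_minus_const_poly)

lemma qfac_monomial_neg:
  "e < 0 \<Longrightarrow> qfac (Va ^ i * Vb ^ j) e = [:[:0, 1:] ^ nat (- e) - [:abmono i j:]:]"
  by (simp add: qfac_def Va_Vb_power_eq Vq_eq poly_const_pow)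

lemma qfac_monomial_nonzero:
  assumes "e \<noteq> 0 \<or> (i, j) \<noteq> (0, 0)"
  shows "qfac (Va ^ i * Vb ^ j) e \<noteq> 0"
proof -
  consider "0 < e" | "e = 0" | "e < 0"
    by linarith
  thus ?thesis
  proof cases
    case 1
    hence "coeff (1 - [:abmono i j:] * [:0, 1:] ^ nat e) 0 = 1"
      by (intro coeff_one_minus_const_X_power) simp
    hence "1 - [:abmono i j:] * [:0, 1:] ^ nat e \<noteq> 0"
      by (metis coeff_0 zero_neq_one)
    thus ?thesis
      using 1 by (simp add: qfac_monomial_nonneg)
  next
    case 2
    hence "abmono i j \<noteq> abmono 0 0"
      using assms by (simp add: abmono_eq_iff)
    thus ?thesis
      using 2 by (simp add: qfac_monomial_nonneg one_minus_const_poly abmono_0_0)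
  next
    case 3
    hence "coeff ([:0, 1:] ^ nat (- e) - [:abmono i j:]) (nat (- e)) = 1"
      by (intro coeff_X_power_minus_const) simp
    hence "[:0, 1:] ^ nat (- e) - [:abmono i j:] \<noteq> 0"
      by (metis coeff_0 zero_neq_one)
    thus ?thesis
      using 3 by (simp add: qfac_monomial_neg)
  qed
qed

text \<open>The factors \<open>1 - a\<^sup>i b\<^sup>j q\<^sup>e\<close> and \<open>1 - a\<^sup>i\<^sup>' b\<^sup>j\<^sup>' q\<^sup>f\<close> have a common zero only if
  \<open>(i, j)/e = (i', j')/f\<close>.\<close>

lemma coprime_qfac_monomials:
  assumes "(int i1 * f, int j1 * f) \<noteq> (int i2 * e, int j2 * e)"
  shows "coprime (qfac (Va ^ i1 * Vb ^ j1) e) (qfac (Va ^ i2 * Vb ^ j2) f)"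
proof (cases "0 \<le> e"; cases "0 \<le> f")
  assume e: "0 \<le> e" and f: "0 \<le> f"
  define ne nf where "ne = nat e" and "nf = nat f"
  with e f have ne: "e = int ne" and nf: "f = int nf"
    by simp_all
  with assms have "(0 < ne \<or> 0 < nf) \<and> (i2 * ne, j2 * ne) \<noteq> (i1 * nf, j1 * nf)"
    by (auto simp flip: of_nat_mult)
  thus ?thesis
    unfolding qfac_monomial_nonneg[OF e] qfac_monomial_nonneg[OF f]
    unfolding ne nf nat_int
    by (intro coprime_const_poly coprime_one_minus_X_power) (auto simp: abmono_power abmono_eq_iff)
next
  assume e: "\<not> 0 \<le> e" and f: "0 \<le> f"
  define ne nf where "ne = nat (- e)" and "nf = nat f"
  with e f have ne: "e = - int ne" and nf: "f = int nf"
    by simp_all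
  with assms e have "0 < ne" "(i2 * ne + i1 * nf, j2 * ne + j1 * nf) \<noteq> (0, 0)"
    by (auto simp flip: of_nat_mult)
  thus ?thesis
    unfolding qfac_monomial_neg[OF e[unfolded not_le]] qfac_monomial_nonneg[OF f]
    unfolding ne nf nat_int minus_minus
    by (intro coprime_const_poly coprime_X_power_minus_one_minus)
      (auto simp: abmono_power abmono_mult abmono_eq_iff abmono_0_0[symmetric])
next
  assume e: "0 \<le> e" and f: "\<not> 0 \<le> f"
  define ne nf where "ne = nat e" and "nf = nat (- f)"
  with e f have ne: "e = int ne" and nf: "f = - int nf"
    by simp_all
  with assms f have "0 < nf" "(i1 * nf + i2 * ne, j1 * nf + j2 * ne) \<noteq> (0, 0)"
    by (auto simp flip: of_nat_mult)
  thus ?thesis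
    unfolding qfac_monomial_nonneg[OF e] qfac_monomial_neg[OF f[unfolded not_le]]
    unfolding ne nf nat_int minus_minus
    by (subst coprime_commute, intro coprime_const_poly coprime_X_power_minus_one_minus)
      (auto simp: abmono_power abmono_mult abmono_eq_iff abmono_0_0[symmetric])
next
  assume e: "\<not> 0 \<le> e" and f: "\<not> 0 \<le> f"
  define ne nf where "ne = nat (- e)" and "nf = nat (- f)"
  with e f have ne: "e = - int ne" and nf: "f = - int nf"
    by simp_all
  with assms e have "0 < ne" "(i2 * ne, j2 * ne) \<noteq> (i1 * nf, j1 * nf)"
    by (auto simp flip: of_nat_mult)
  thus ?thesis
    unfolding qfac_monomial_neg[OF e[unfolded not_le]] qfac_monomial_neg[OF f[unfolded not_le]]
    unfolding ne nf nat_int minus_minus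
    by (intro coprime_const_poly coprime_X_power_minus) (auto simp: abmono_power abmono_eq_iff)
qed

lemma coprime_Vq_qfac_monomial:
  assumes "e \<noteq> 0 \<or> (i, j) \<noteq> (0, 0)"
  shows "coprime Vq (qfac (Va ^ i * Vb ^ j) e)"
proof (cases "0 \<le> e")
  case True
  have "abmono i j \<noteq> abmono 0 0 \<or> 0 < nat e"
    using assms True by (auto simp: abmono_eq_iff)
  hence "coprime ([:0, 1:] ^ 1 - [:0:]) (1 - [:abmono i j:] * [:0, 1:] ^ nat e)"
    by (intro coprime_X_power_minus_one_minus) (auto simp: abmono_0_0 power_0_left)
  thus ?thesis
    unfolding qfac_monomial_nonneg[OF True] Vq_eq using coprime_const_poly by fastforce
next
  case False
  hence "coprime ([:0, 1:] ^ 1 - [:0:]) ([:0, 1:] ^ nat (- e) - [:abmono i j:])"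
    by (intro coprime_X_power_minus) (simp_all add: abmono_nonzero power_0_left)
  thus ?thesis
    unfolding qfac_monomial_neg[of e, OF False[unfolded not_le]] Vq_eq using coprime_const_poly by fastforce
qed

lemma unit_at_rcong:
  assumes "rcong x y P" "unit_at P y" "x \<noteq> 0"
  shows "unit_at P x"
proof -
  obtain C D where CD: "C \<noteq> 0" "D \<noteq> 0" "coprime C P" "coprime D P" and y: "y = emb C / emb D"
    using assms(2) unfolding unit_at_def by blast
  obtain E F where F: "F \<noteq> 0" "coprime F P" and xy: "x - y = emb P * emb E / emb F"
    using assms(1) unfolding rcong_def by blast
  have x: "x = emb (C * F + (E * D) * P) / emb (D * F)"
    using CD F xy unfolding y by (simp add: emb_simps emb_eq_0_iff field_simps)
  hence "C * F + (E * D) * P \<noteq> 0"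
    using assms(3) by (auto simp: emb_0)
  moreover have "coprime (C * F + (E * D) * P) P"
  proof -
    have "gcd (C * F + (E * D) * P) P = gcd (C * F) P"
      using gcd_add_mult[of P "E * D" "C * F"] by (simp add: gcd.commute add.commute)
    thus ?thesis
      using CD F by (simp add: coprime_iff_gcd_eq_1 flip: coprime_iff_gcd_eq_1)
  qed
  ultimately show ?thesis
    unfolding unit_at_def using x CD F by (intro exI conjI) auto
qed

lemma emb_Vq_nonzero: "emb Vq \<noteq> 0"
  by (simp add: emb_eq_0_iff Vq_def)

lemma one_minus_Vq_power_int:
  "1 - emb y * emb Vq powi e = emb (qfac y e) * emb Vq powi (min e 0)"
proof (cases "0 \<le> e")
  case True
  thus ?thesis
    by (simp add: qfac_def emb_simps power_int_def)
next
  case False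
  thus ?thesis
    using emb_Vq_nonzero by (simp add: qfac_def emb_simps power_int_def field_simps)
qed

lemma unit_at_power_int: "unit_at P z \<Longrightarrow> unit_at P (z powi e)"
  by (simp add: power_int_def unit_at_power unit_at_inverse)

lemma rcong_qfac:
  assumes "coprime Vq (qfac y e)"
  shows "rcong (emb y * emb Vq powi e) 1 (qfac y e)"
proof -
  have "unit_at (qfac y e) (emb Vq powi (min e 0))"
    using assms by (intro unit_at_power_int unit_at_emb) (simp_all add: Vq_def)
  hence "rcong 1 (emb y * emb Vq powi e) (qfac y e)"
    unfolding rcong_iff one_minus_Vq_power_int by (blast intro: unit_at_imp_regular_at)
  thus ?thesis
    by (rule rcong_sym)
qed

definition avoids_denominators :: "mpoly4 \<Rightarrow> bool" where
  "avoids_denominators P \<longleftrightarrow>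
    coprime Vq P \<and> (\<forall>J>0. coprime (1 - Vq ^ J) P) \<and> (\<forall>J>0. coprime (1 - Va * Vb * Vq ^ J) P)"

lemma avoids_denominators_mult:
  "avoids_denominators P1 \<Longrightarrow> avoids_denominators P2 \<Longrightarrow> avoids_denominators (P1 * P2)"
  unfolding avoids_denominators_def by simp

lemma avoids_denominators_qfac_monomial:
  assumes "i \<noteq> j"
  shows "avoids_denominators (qfac (Va ^ i * Vb ^ j) e)"
proof -
  have "coprime (qfac (Va ^ 0 * Vb ^ 0) (int J)) (qfac (Va ^ i * Vb ^ j) e)" if "0 < J" for J
    by (rule coprime_qfac_monomials) (use assms that in auto)
  moreover have "coprime (qfac (Va ^ 1 * Vb ^ 1) (int J)) (qfac (Va ^ i * Vb ^ j) e)" if "0 < J" for J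
    by (rule coprime_qfac_monomials) (use assms that in auto)
  moreover have "coprime Vq (qfac (Va ^ i * Vb ^ j) e)"
    using assms by (intro coprime_Vq_qfac_monomial) auto
  ultimately show ?thesis
    unfolding avoids_denominators_def by (simp add: qfac_def)
qed

context
  fixes P :: mpoly4
  assumes P: "avoids_denominators P"
begin

lemma unit_at_Vq: "unit_at P (emb Vq)"
  using P by (intro unit_at_emb) (simp_all add: avoids_denominators_def Vq_def)

lemma regular_at_Vq_power_int: "regular_at P (emb Vq powi e)"
  using unit_at_Vq by (intro unit_at_imp_regular_at unit_at_power_int)

lemma unit_at_one_minus_Vq_power: "0 < J \<Longrightarrow> unit_at P (1 - emb Vq ^ J)"
  using P qfac_monomial_nonzero[of "int J" 0 0] unit_at_emb[of "1 - Vq ^ J" P]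
  by (simp add: avoids_denominators_def qfac_def emb_simps)

lemma unit_at_one_minus_ab_Vq_power: "0 < J \<Longrightarrow> unit_at P (1 - emb Va * emb Vb * emb Vq ^ J)"
  using P qfac_monomial_nonzero[of "int J" 1 1] unit_at_emb[of "1 - Va * Vb * Vq ^ J" P]
  by (simp add: avoids_denominators_def qfac_def emb_simps)

end

section \<open>Truncation modulo one factor\<close>

definition tsummand :: "rfun4 \<Rightarrow> rfun4 \<Rightarrow> rfun4 \<Rightarrow> rfun4 \<Rightarrow> nat \<Rightarrow> rfun4" where
  "tsummand Q u w y k =
    qpoch u Q k * qpoch w Q k * qpoch y Q k * Q ^ k / (qpoch Q Q k * qpoch (u * w * Q) (Q ^ 2) k)"

lemma tsummand_commute: "tsummand Q u w = tsummand Q w u"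
  by (simp add: tsummand_def fun_eq_iff mult_ac)

lemma regular_at_tsummand:
  assumes "regular_at P u" "regular_at P w" "regular_at P y" "unit_at P Q"
    "\<And>i. unit_at P (1 - Q * Q ^ i)" "\<And>i. unit_at P (1 - u * w * Q * (Q ^ 2) ^ i)"
  shows "regular_at P (tsummand Q u w y k)"
  unfolding tsummand_def using assms
  by (intro regular_at_divide) (simp_all add: regular_at_mult regular_at_qpoch regular_at_power
      unit_at_imp_regular_at unit_at_mult unit_at_qpoch)

text \<open>The key hypothesis is \<open>u \<equiv> Q\<^sup>-\<^sup>N (mod P)\<close>; it turns the sum into the terminating one above.\<close>

locale truncation =
  fixes P :: mpoly4 and Q u w :: rfun4 and N :: nat
  assumes regular_u: "regular_at P u"
    and regular_w: "regular_at P w"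
    and unit_Q: "unit_at P Q"
    and unit_base: "\<And>i. unit_at P (1 - Q * Q ^ i)"
    and unit_square_base: "\<And>i. unit_at P (1 - u * w * Q * (Q ^ 2) ^ i)"
    and u_cong: "rcong (u * Q ^ N) 1 P"
    and generic: "generic Q w"
begin

lemma regular_inverse_power: "regular_at P (inverse Q ^ N)"
  using unit_Q by (intro unit_at_imp_regular_at unit_at_power unit_at_inverse)

lemma u_cong_inverse_power: "rcong u (inverse Q ^ N) P"
proof -
  have "inverse Q ^ N * (u * Q ^ N) = u"
    using unit_at_nonzero[OF unit_Q] by (simp add: field_simps)
  thus ?thesis
    using rcong_mult_left[OF u_cong regular_inverse_power] by (simp only: mult_1_right)
qed

lemma square_base_cong: "rcong (u * w * Q) (w * Q * inverse Q ^ N) P"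
proof -
  have "rcong (u * (w * Q)) (inverse Q ^ N * (w * Q)) P"
    using regular_w unit_Q
    by (intro rcong_mult_right[OF u_cong_inverse_power]) (simp add: regular_at_mult unit_at_imp_regular_at)
  thus ?thesis
    by (simp only: mult_ac)
qed

lemma regular_Q: "regular_at P Q"
  using unit_Q by (rule unit_at_imp_regular_at)

lemma unit_tcoeff_square_base: "unit_at P (1 - w * Q * inverse Q ^ N * (Q ^ 2) ^ i)"
proof (rule unit_at_rcong)
  have "rcong (w * Q * inverse Q ^ N * (Q ^ 2) ^ i) (u * w * Q * (Q ^ 2) ^ i) P"
    using rcong_sym[OF square_base_cong] regular_Q by (intro rcong_mult_right) (simp_all add: regular_at_power)
  thus "rcong (1 - w * Q * inverse Q ^ N * (Q ^ 2) ^ i) (1 - u * w * Q * (Q ^ 2) ^ i) P"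
    by (intro rcong_diff rcong_refl)
  have "(Q ^ 2) ^ i = Q ^ (2 * i)"
    by (simp add: power_mult)
  hence "w * Q * inverse Q ^ N * (Q ^ 2) ^ i = w * (Q ^ (1 + 2 * i) * inverse Q ^ N)"
    unfolding power_add by (simp add: mult_ac)
  thus "1 - w * Q * inverse Q ^ N * (Q ^ 2) ^ i \<noteq> 0"
    by (metis generic_power_ratio_ne_1[OF generic] right_minus_eq)
qed (rule unit_square_base)

lemma tsummand_cong:
  assumes "regular_at P y"
  shows "rcong (tsummand Q u w y k) (tcoeff Q N w k * qpoch y Q k) P"
proof -
  define R where "R = qpoch w Q k * qpoch y Q k * Q ^ k"
  have R: "regular_at P R"
    unfolding R_def using assms regular_w regular_Q
    by (simp add: regular_at_mult regular_at_qpoch regular_at_power)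
  have "rcong (qpoch u Q k * R) (qpoch (inverse Q ^ N) Q k * R) P"
    using u_cong_inverse_power regular_u regular_inverse_power regular_Q R
    by (intro rcong_mult_right rcong_qpoch)
  moreover have "rcong (qpoch Q Q k * qpoch (u * w * Q) (Q ^ 2) k)
      (qpoch Q Q k * qpoch (w * Q * inverse Q ^ N) (Q ^ 2) k) P"
    using square_base_cong regular_u regular_w regular_Q regular_inverse_power
    by (intro rcong_mult_left rcong_qpoch) (simp_all add: regular_at_qpoch regular_at_mult regular_at_power)
  moreover have "regular_at P (qpoch (inverse Q ^ N) Q k * R)"
    using regular_inverse_power regular_Q R by (simp add: regular_at_mult regular_at_qpoch)
  moreover have "unit_at P (qpoch Q Q k * qpoch (u * w * Q) (Q ^ 2) k)"
    "unit_at P (qpoch Q Q k * qpoch (w * Q * inverse Q ^ N) (Q ^ 2) k)"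
    using unit_base unit_square_base unit_tcoeff_square_base by (simp_all add: unit_at_mult unit_at_qpoch)
  ultimately have "rcong (qpoch u Q k * R / (qpoch Q Q k * qpoch (u * w * Q) (Q ^ 2) k))
      (qpoch (inverse Q ^ N) Q k * R / (qpoch Q Q k * qpoch (w * Q * inverse Q ^ N) (Q ^ 2) k)) P"
    by (rule rcong_divide)
  thus ?thesis
    unfolding tsummand_def tcoeff_def R_def by (simp add: mult_ac)
qed

lemma tsummand_cong_0:
  assumes "regular_at P y" "N < k"
  shows "rcong (tsummand Q u w y k) 0 P"
proof -
  obtain l where k: "k = Suc N + l"
    using assms(2) less_iff_Suc_add by blast
  define R where "R = qpoch u Q N * qpoch (u * Q ^ Suc N) Q l * qpoch w Q k * qpoch y Q k * Q ^ k /
    (qpoch Q Q k * qpoch (u * w * Q) (Q ^ 2) k)"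
  have "tsummand Q u w y k = (1 - u * Q ^ N) * R"
    unfolding tsummand_def R_def k qpoch_add by (simp add: qpoch_Suc mult_ac)
  moreover have "rcong (1 - u * Q ^ N) (1 - 1) P"
    using u_cong by (intro rcong_diff rcong_refl)
  moreover have "regular_at P R"
    unfolding R_def using assms(1) regular_u regular_w regular_Q unit_base unit_square_base
    by (intro regular_at_divide) (simp_all add: regular_at_mult regular_at_qpoch regular_at_power
        unit_at_mult unit_at_qpoch)
  ultimately show ?thesis
    using rcong_mult_right[of "1 - u * Q ^ N" "1 - 1" P R] by simp
qed

lemma sum_tsummand_cong:
  assumes "regular_at P y" "N < n"
  shows "rcong (\<Sum>k<n. tsummand Q u w y k) (\<Sum>k<Suc N. tcoeff Q N w k * qpoch y Q k) P"
proof -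
  have "{..<n} = {..<Suc N} \<union> {Suc N..<n}"
    using assms(2) by auto
  hence "(\<Sum>k<n. tsummand Q u w y k) = sum (tsummand Q u w y) ({..<Suc N} \<union> {Suc N..<n})"
    by (simp only:)
  also have "\<dots> = (\<Sum>k<Suc N. tsummand Q u w y k) + (\<Sum>k\<in>{Suc N..<n}. tsummand Q u w y k)"
    by (rule sum.union_disjoint) auto
  finally have "(\<Sum>k<n. tsummand Q u w y k) = (\<Sum>k<Suc N. tsummand Q u w y k) + (\<Sum>k\<in>{Suc N..<n}. tsummand Q u w y k)" .
  moreover have "rcong (\<Sum>k<Suc N. tsummand Q u w y k) (\<Sum>k<Suc N. tcoeff Q N w k * qpoch y Q k) P"
    using tsummand_cong[OF assms(1)] by (rule rcong_sum)
  moreover have "rcong (\<Sum>k\<in>{Suc N..<n}. tsummand Q u w y k) (\<Sum>k\<in>{Suc N..<n}. 0) P"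
    using tsummand_cong_0[OF assms(1)] by (intro rcong_sum) simp
  ultimately show ?thesis
    using rcong_add by fastforce
qed

lemma sum_tsummand_reflect:
  assumes "regular_at P x" "N < n"
  shows "rcong (\<Sum>k<n. tsummand Q u w x k) ((-1) ^ N * (\<Sum>k<n. tsummand Q u w (- x) k)) P"
proof -
  have "rcong (\<Sum>k<n. tsummand Q u w x k) (\<Sum>k<Suc N. tcoeff Q N w k * qpoch x Q k) P"
    using sum_tsummand_cong assms by blast
  also have "(\<Sum>k<Suc N. tcoeff Q N w k * qpoch x Q k) =
      (-1) ^ N * (\<Sum>k<Suc N. tcoeff Q N w k * qpoch (- x) Q k)"
    using tcoeff_sum_reflect[OF generic] .
  finally have "rcong (\<Sum>k<n. tsummand Q u w x k)
      ((-1) ^ N * (\<Sum>k<Suc N. tcoeff Q N w k * qpoch (- x) Q k)) P" .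
  moreover have "rcong ((-1) ^ N * (\<Sum>k<n. tsummand Q u w (- x) k))
      ((-1) ^ N * (\<Sum>k<Suc N. tcoeff Q N w k * qpoch (- x) Q k)) P"
    using sum_tsummand_cong[of "- x"] assms
    by (intro rcong_mult_left) (simp_all add: regular_at_minus regular_at_power)
  ultimately show ?thesis
    by (blast intro: rcong_trans rcong_sym)
qed

end

section \<open>Least residues\<close>

lemma lnres_condition_iff:
  fixes A :: int and D n t :: nat
  assumes D: "0 < D" and cDn: "coprime D n"
  shows "(let (u, v) = quotient_of (of_int A / of_int (int D) - of_nat t) in coprime v (int n) \<and> int n dvd u)
     \<longleftrightarrow> int n dvd A - int D * int t"
proof -
  obtain u v where uv: "quotient_of (of_int A / of_int (int D) - of_nat t) = (u, v)"
    by (cases "quotient_of (of_int A / of_int (int D) - of_nat t)")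
  have "(of_int (A - int D * int t) / of_int (int D) :: rat) = of_int u / of_int v"
    using quotient_of_div[OF uv] D by (simp add: field_simps)
  hence "(of_int ((A - int D * int t) * v) :: rat) = of_int (u * int D)"
    using D quotient_of_denom_pos[OF uv] by (simp add: field_simps)
  hence key: "(A - int D * int t) * v = u * int D"
    by (simp only: of_int_eq_iff)
  have "coprime v (int n) \<and> int n dvd u \<longleftrightarrow> int n dvd A - int D * int t"
  proof
    assume "coprime v (int n) \<and> int n dvd u"
    moreover from this have "int n dvd (A - int D * int t) * v"
      unfolding key by simp
    ultimately show "int n dvd A - int D * int t"
      by (simp add: coprime_commute coprime_dvd_mult_left_iff)
  next
    assume n: "int n dvd A - int D * int t"
    have "v dvd u * int D"
      unfolding key[symmetric] by simp
    hence "v dvd int D"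
      using quotient_of_coprime[OF uv] by (simp add: coprime_commute coprime_dvd_mult_right_iff)
    hence "coprime v (int n)"
      using cDn by (simp add: coprime_divisors[OF _ dvd_refl])
    moreover have "int n dvd u * int D"
      unfolding key[symmetric] using n by simp
    hence "int n dvd u"
      using cDn by (simp add: coprime_commute coprime_dvd_mult_left_iff)
    ultimately show "coprime v (int n) \<and> int n dvd u"
      by simp
  qed
  thus ?thesis
    unfolding uv by simp
qed

lemma lnres_eqI:
  fixes A :: int and D n t :: nat
  assumes "0 < D" "coprime D n" "t < n" "int n dvd A - int D * int t"
  shows "lnres (of_int A / of_int (int D)) n = t"
  unfolding lnres_def
proof (rule the_equality)
  show "t < n \<and> (let (u, v) = quotient_of (of_int A / of_int (int D) - of_nat t) in coprime v (int n) \<and> int n dvd u)"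
    using assms lnres_condition_iff[of D n A t] by simp
next
  fix t'
  assume "t' < n \<and> (let (u, v) = quotient_of (of_int A / of_int (int D) - of_nat t') in coprime v (int n) \<and> int n dvd u)"
  hence t': "t' < n" "int n dvd A - int D * int t'"
    using lnres_condition_iff[OF assms(1,2)] by auto
  have "int n dvd int D * (int t - int t')"
    using dvd_diff[OF t'(2) assms(4)] by (simp add: algebra_simps)
  hence "int n dvd int t - int t'"
    using assms(2) by (simp add: coprime_commute coprime_dvd_mult_right_iff)
  moreover have "\<bar>int t - int t'\<bar> < int n"
    using assms(3) t'(1) by simp
  ultimately have "int t - int t' = 0"
    using dvd_imp_le_int[of "int t - int t'" "int n"] by (cases "int t - int t' = 0") auto
  thus "t' = t"
    by simp
qed

lemma lnres_exists:
  fixes A :: int and D n :: nat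
  assumes "0 < n" "coprime D n"
  shows "\<exists>t<n. int n dvd A - int D * int t"
proof -
  obtain y where y: "[int D * y = 1] (mod int n)"
    using assms(2) cong_solve_coprime_int by (metis coprime_int_iff)
  define t where "t = nat ((A * y) mod int n)"
  have t: "int t = (A * y) mod int n"
    using assms(1) by (simp add: t_def)
  have "[int D * int t = int D * (A * y)] (mod int n)"
    unfolding t by (simp add: cong_def mod_mult_right_eq)
  also have "[int D * (A * y) = A * (int D * y)] (mod int n)"
    by (simp add: mult_ac)
  also have "[A * (int D * y) = A * 1] (mod int n)"
    using y by (rule cong_scalar_left)
  finally have "int n dvd A - int D * int t"
    by (simp add: cong_iff_dvd_diff dvd_diff_commute)
  moreover have "t < n"
    using assms(1) t by (simp add: t_def nat_less_iff)
  ultimately show ?thesis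
    by blast
qed

lemma power_power_eq_power_int: "(x ^ d) ^ J = (x :: 'a::field) powi (int d * int J)"
  by (simp add: power_mult[symmetric] of_nat_mult[symmetric] del: of_nat_mult)

lemma monomial_Vq_power_int_ne_1:
  assumes "e \<noteq> 0 \<or> (i, j) \<noteq> (0, 0)"
  shows "emb (Va ^ i * Vb ^ j) * emb Vq powi e \<noteq> 1"
proof -
  have "1 - emb (Va ^ i * Vb ^ j) * emb Vq powi e \<noteq> 0"
    unfolding one_minus_Vq_power_int using qfac_monomial_nonzero[OF assms] emb_Vq_nonzero
    by (simp add: emb_eq_0_iff)
  thus ?thesis
    by simp
qed

lemma generic_Vq_power:
  assumes "0 < d" "(i, j) \<noteq> (0, 0)"
  shows "generic (emb Vq ^ d) (emb (Va ^ i * Vb ^ j) * emb Vq powi z)"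
  unfolding generic_def
proof (intro conjI allI impI)
  show "emb Vq ^ d \<noteq> 0"
    using emb_Vq_nonzero by simp
  fix J :: nat
  assume "0 < J"
  have "(emb Vq ^ d) ^ J = emb (Va ^ 0 * Vb ^ 0) * emb Vq powi int (d * J)"
    by (simp add: power_power_eq_power_int emb_1)
  thus "(emb Vq ^ d) ^ J \<noteq> 1"
    using monomial_Vq_power_int_ne_1[of "int (d * J)" 0 0] \<open>0 < J\<close> assms(1) by simp
next
  fix k :: int
  have "emb (Va ^ i * Vb ^ j) * emb Vq powi z * (emb Vq ^ d) powi k =
      emb (Va ^ i * Vb ^ j) * emb Vq powi (z + int d * k)"
    using emb_Vq_nonzero by (simp add: power_int_add power_int_mult mult.assoc)
  also have "\<dots> \<noteq> 1"
    using assms(2) by (intro monomial_Vq_power_int_ne_1) simp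
  finally show "emb (Va ^ i * Vb ^ j) * emb Vq powi z * (emb Vq ^ d) powi k \<noteq> 1" .
qed

lemma tsummand_denominators_units:
  fixes d :: nat and z1 z2 :: int
  assumes P: "avoids_denominators P" and "0 < d" "z1 + z2 = int d" "i1 + i2 = 1" "j1 + j2 = 1"
  defines "u \<equiv> emb (Va ^ i1 * Vb ^ j1) * emb Vq powi z1" and "w \<equiv> emb (Va ^ i2 * Vb ^ j2) * emb Vq powi z2"
  shows "regular_at P u" "regular_at P w" "unit_at P (emb Vq ^ d)"
    "\<And>i. unit_at P (1 - emb Vq ^ d * (emb Vq ^ d) ^ i)"
    "\<And>i. unit_at P (1 - u * w * emb Vq ^ d * ((emb Vq ^ d) ^ 2) ^ i)"
proof -
  show "regular_at P u" "regular_at P w"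
    unfolding u_def w_def using regular_at_Vq_power_int[OF P] by (simp_all add: regular_at_mult)
  show "unit_at P (emb Vq ^ d)"
    using unit_at_Vq[OF P] by (rule unit_at_power)
  fix i
  have "emb Vq ^ d * (emb Vq ^ d) ^ i = emb Vq ^ (d * Suc i)"
    by (simp add: power_mult[symmetric] power_add[symmetric] mult.commute)
  thus "unit_at P (1 - emb Vq ^ d * (emb Vq ^ d) ^ i)"
    using unit_at_one_minus_Vq_power[OF P, of "d * Suc i"] assms(2) by simp
  have "emb (Va ^ i1 * Vb ^ j1) * emb (Va ^ i2 * Vb ^ j2) = emb Va * emb Vb"
    using assms(4,5) by (simp add: emb_simps power_add[symmetric] mult_ac)
  moreover have "emb Vq powi z1 * emb Vq powi z2 = emb Vq ^ d"
    using emb_Vq_nonzero assms(3) by (simp add: power_int_add[symmetric])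
  ultimately have "u * w * emb Vq ^ d * ((emb Vq ^ d) ^ 2) ^ i =
      emb Va * emb Vb * emb Vq ^ (2 * d * Suc i)"
    unfolding u_def w_def by (simp add: power_mult[symmetric] power_add[symmetric] mult_ac)
  thus "unit_at P (1 - u * w * emb Vq ^ d * ((emb Vq ^ d) ^ 2) ^ i)"
    using unit_at_one_minus_ab_Vq_power[OF P, of "2 * d * Suc i"] assms(2) by simp
qed

lemma truncation_qfac_monomial:
  fixes d N :: nat and z1 z2 :: int
  assumes "0 < d" "z1 + z2 = int d" "i1 + i2 = 1" "j1 + j2 = 1" "i1 \<noteq> j1"
  shows "truncation (qfac (Va ^ i1 * Vb ^ j1) (z1 + int d * int N)) (emb Vq ^ d)
    (emb (Va ^ i1 * Vb ^ j1) * emb Vq powi z1) (emb (Va ^ i2 * Vb ^ j2) * emb Vq powi z2) N"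
proof -
  have P: "avoids_denominators (qfac (Va ^ i1 * Vb ^ j1) (z1 + int d * int N))"
    using assms(5) by (rule avoids_denominators_qfac_monomial)
  note units = tsummand_denominators_units[OF P assms(1-4)]
  have "emb (Va ^ i1 * Vb ^ j1) * emb Vq powi z1 * (emb Vq ^ d) ^ N =
      emb (Va ^ i1 * Vb ^ j1) * emb Vq powi (z1 + int d * int N)"
    using emb_Vq_nonzero by (simp add: power_int_add power_power_eq_power_int mult.assoc)
  moreover have "rcong (emb (Va ^ i1 * Vb ^ j1) * emb Vq powi (z1 + int d * int N)) 1
      (qfac (Va ^ i1 * Vb ^ j1) (z1 + int d * int N))"
    using assms(5) by (intro rcong_qfac coprime_Vq_qfac_monomial) auto
  ultimately have u_cong: "rcong (emb (Va ^ i1 * Vb ^ j1) * emb Vq powi z1 * (emb Vq ^ d) ^ N) 1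
      (qfac (Va ^ i1 * Vb ^ j1) (z1 + int d * int N))"
    by (simp only:)
  have "(i2, j2) \<noteq> (0, 0)"
    using assms(3-5) by auto
  with assms(1) have "generic (emb Vq ^ d) (emb (Va ^ i2 * Vb ^ j2) * emb Vq powi z2)"
    by (rule generic_Vq_power)
  with units u_cong show ?thesis
    by unfold_locales
qed

lemma tsummand_eq:
  "qpoch (emb Va * emb Vq ^ r) (emb Vq ^ d) k * qpoch (emb Vb * emb Vq powi (int d - int r)) (emb Vq ^ d) k
     * qpoch y (emb Vq ^ d) k * emb Vq ^ (d * k)
   / (qpoch (emb Vq ^ d) (emb Vq ^ d) k * qpoch (emb Va * emb Vb * emb Vq ^ (2 * d)) (emb Vq ^ (2 * d)) k)
   = tsummand (emb Vq ^ d) (emb Va * emb Vq ^ r) (emb Vb * emb Vq powi (int d - int r)) y k"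
proof -
  have q: "emb Vq ^ r * emb Vq powi (int d - int r) = emb Vq ^ d"
    using emb_Vq_nonzero by (simp add: power_int_diff)
  have "emb Va * emb Vq ^ r * (emb Vb * emb Vq powi (int d - int r)) * emb Vq ^ d =
      emb Va * emb Vb * (emb Vq ^ r * emb Vq powi (int d - int r)) * emb Vq ^ d"
    by (simp only: mult_ac)
  also have "\<dots> = emb Va * emb Vb * emb Vq ^ (2 * d)"
    unfolding q by (simp add: mult_2 power_add mult.assoc)
  finally have uwQ: "emb Va * emb Vb * emb Vq ^ (2 * d) =
      emb Va * emb Vq ^ r * (emb Vb * emb Vq powi (int d - int r)) * emb Vq ^ d" ..
  have "emb Vq ^ (2 * d) = (emb Vq ^ d) ^ 2" "emb Vq ^ (d * k) = (emb Vq ^ d) ^ k"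
    by (simp_all add: power_mult[symmetric] mult.commute)
  thus ?thesis
    unfolding uwQ unfolding tsummand_def by (simp only:)
qed

definition abq_sum :: "nat \<Rightarrow> nat \<Rightarrow> nat \<Rightarrow> rfun4 \<Rightarrow> rfun4" where
  "abq_sum d r n y =
    (\<Sum>k<n. tsummand (emb Vq ^ d) (emb Va * emb Vq ^ r) (emb Vb * emb Vq powi (int d - int r)) y k)"

lemma abq_sum_cong_Va:
  assumes "0 < d" "N < n"
  shows "rcong (abq_sum d r n (emb Vx)) ((-1) ^ N * abq_sum d r n (- emb Vx)) (qfac Va (int r + int d * int N))"
proof -
  have "truncation (qfac Va (int r + int d * int N)) (emb Vq ^ d)
      (emb Va * emb Vq ^ r) (emb Vb * emb Vq powi (int d - int r)) N"
    using truncation_qfac_monomial[OF assms(1), of "int r" "int d - int r" 1 0 0 1 N] by simp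
  thus ?thesis
    unfolding abq_sum_def using regular_at_emb assms(2) by (rule truncation.sum_tsummand_reflect)
qed

lemma abq_sum_cong_Vb:
  assumes "0 < d" "N < n"
  shows "rcong (abq_sum d r n (emb Vx)) ((-1) ^ N * abq_sum d r n (- emb Vx))
    (qfac Vb (int d - int r + int d * int N))"
proof -
  have "truncation (qfac Vb (int d - int r + int d * int N)) (emb Vq ^ d)
      (emb Vb * emb Vq powi (int d - int r)) (emb Va * emb Vq ^ r) N"
    using truncation_qfac_monomial[OF assms(1), of "int d - int r" "int r" 0 1 1 0 N] by simp
  thus ?thesis
    unfolding abq_sum_def tsummand_commute[of "emb Vq ^ d" "emb Va * emb Vq ^ r"]
    using regular_at_emb assms(2) by (rule truncation.sum_tsummand_reflect)
qed

lemma regular_at_abq_sum: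
  assumes "avoids_denominators P" "0 < d" "regular_at P y"
  shows "regular_at P (abq_sum d r n y)"
  unfolding abq_sum_def
  using tsummand_denominators_units[OF assms(1,2), of "int r" "int d - int r" 1 0 0 1] assms(3)
  by (intro regular_at_sum regular_at_tsummand) simp_all

lemma coprime_qfac_Va_Vb: "e \<noteq> 0 \<Longrightarrow> coprime (qfac Va e) (qfac Vb f)"
  using coprime_qfac_monomials[of 1 f 0 0 e 1] by simp

lemma avoids_denominators_qfac_Va_Vb: "avoids_denominators (qfac Va e * qfac Vb f)"
  using avoids_denominators_qfac_monomial[of 1 0 e] avoids_denominators_qfac_monomial[of 0 1 f]
  by (intro avoids_denominators_mult) simp_all

lemma lnres_complement:
  assumes "0 < d" "0 < n" "coprime d n"
  obtains s where "s < n" "lnres (- of_nat r / of_nat d) n = s"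
    "lnres ((of_nat r - of_nat d) / of_nat d) n = n - 1 - s"
proof -
  obtain s where s: "s < n" "int n dvd - int r - int d * int s"
    using lnres_exists[OF assms(2,3)] by blast
  have "lnres (of_int (- int r) / of_int (int d)) n = s"
    using assms(1,3) s by (rule lnres_eqI)
  moreover have "lnres (of_int (int r - int d) / of_int (int d)) n = n - 1 - s"
  proof (rule lnres_eqI[OF assms(1,3)])
    show "n - 1 - s < n"
      using assms(2) by simp
    have "(int r - int d) - int d * int (n - 1 - s) = int n * (- int d) - (- int r - int d * int s)"
      using s(1) by (simp add: of_nat_diff algebra_simps)
    thus "int n dvd (int r - int d) - int d * int (n - 1 - s)"
      using s(2) by (metis dvd_diff dvd_triv_left)
  qed
  ultimately show ?thesis
    using that s(1) by simp
qed

theorem theorem1p3: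
  fixes d n r :: nat
  assumes "0 < d" and "0 < n" and "0 < r" and "coprime d n" and "odd n"
  shows "rcong
    (\<Sum>k<n. qpoch (emb Va * emb Vq ^ r) (emb Vq ^ d) k
             * qpoch (emb Vb * emb Vq powi (int d - int r)) (emb Vq ^ d) k
             * qpoch (emb Vx) (emb Vq ^ d) k * emb Vq ^ (d * k)
           / (qpoch (emb Vq ^ d) (emb Vq ^ d) k
              * qpoch (emb Va * emb Vb * emb Vq ^ (2 * d)) (emb Vq ^ (2 * d)) k))
    ((-1) ^ lnres (- of_nat r / of_nat d) n *
     (\<Sum>k<n. qpoch (emb Va * emb Vq ^ r) (emb Vq ^ d) k
             * qpoch (emb Vb * emb Vq powi (int d - int r)) (emb Vq ^ d) k
             * qpoch (- emb Vx) (emb Vq ^ d) k * emb Vq ^ (d * k)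
           / (qpoch (emb Vq ^ d) (emb Vq ^ d) k
              * qpoch (emb Va * emb Vb * emb Vq ^ (2 * d)) (emb Vq ^ (2 * d)) k)))
    (qfac Va (int r + int d * int (lnres (- of_nat r / of_nat d) n))
     * qfac Vb (int d - int r + int d * int (lnres ((of_nat r - of_nat d) / of_nat d) n)))"
proof -
  obtain s where s: "s < n" and lnres_s: "lnres (- of_nat r / of_nat d) n = s"
    and lnres_t: "lnres ((of_nat r - of_nat d) / of_nat d) n = n - 1 - s"
    using lnres_complement[OF assms(1,2,4)] .
  define P1 P2 where "P1 = qfac Va (int r + int d * int s)"
    and "P2 = qfac Vb (int d - int r + int d * int (n - 1 - s))"
  have "even (n - 1 - s + s)"
    using s assms(5) by simp
  hence sign: "(-1 :: rfun4) ^ (n - 1 - s) = (-1) ^ s"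
    by (metis minus_one_power_iff even_add)
  have "rcong (abq_sum d r n (emb Vx)) ((-1) ^ s * abq_sum d r n (- emb Vx)) (P1 * P2)"
  proof (rule rcong_coprime_mult)
    have "0 \<le> int d * int s" "0 < int r"
      using assms(3) by simp_all
    thus "coprime P1 P2"
      unfolding P1_def P2_def by (intro coprime_qfac_Va_Vb) linarith
    show "regular_at (P1 * P2) (abq_sum d r n (emb Vx) - (-1) ^ s * abq_sum d r n (- emb Vx))"
      unfolding P1_def P2_def using avoids_denominators_qfac_Va_Vb assms(1)
      by (intro regular_at_diff regular_at_mult regular_at_power regular_at_minus
          regular_at_1 regular_at_emb regular_at_abq_sum)
    show "rcong (abq_sum d r n (emb Vx)) ((-1) ^ s * abq_sum d r n (- emb Vx)) P1"
      unfolding P1_def using assms(1) s by (rule abq_sum_cong_Va)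
    show "rcong (abq_sum d r n (emb Vx)) ((-1) ^ s * abq_sum d r n (- emb Vx)) P2"
      unfolding P2_def sign[symmetric] using assms(1) by (rule abq_sum_cong_Vb) (use s in simp)
  qed
  thus ?thesis
    unfolding lnres_s lnres_t P1_def P2_def abq_sum_def tsummand_eq .
qed

end
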